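(* Let $\nu\in\mathscr{P}_{\mathbb{T}^2}$ with marginals $\nu^{(1)},\nu^{(2)}$. (1) $\nu$ has the $\boxtimes\boxtimes$-factor $\mathrm{m}\times\delta_1$ if and only if $\nu=\mathrm{m}\times\nu^{(2)}$. (2) $\nu$ has the $\boxtimes\boxtimes$-factor $\delta_1\times\mathrm{m}$ if and only if $\nu=\nu^{(1)}\times\mathrm{m}$. (3) $\nu$ has the $\boxtimes\boxtimes$-factor $\mathrm{m}\times\mathrm{m}$ if and only if $\nu=\mathrm{m}\times\mathrm{m}$. (4) $P$ is a $\boxtimes\boxtimes$-factor of $\nu$ if and only if $m_{p,q}(\nu)=\delta_{p,q}\,m_{1,1}(\nu)^p$ for all $(p,q)\in\mathbb{Z}\times(\mathbb{N}\cup\{0\})$, where $\delta_{p,q}$ is the Kronecker delta. Statements (1)–(3) remain true if $\boxtimes\boxtimes$ is replaced by $\boxtimes\boxtimes^{\mathrm{op}}$. Moreover, $P^\star$ is a $\boxtimes\boxtimes^{\mathrm{op}}$-factor of $\nu$ if and only if $m_{p,q}(\nu)=\delta_{p,-q}\,m_{1,-1}(\nu)^p$ for all $(p,q)\in\mathbb{Z}\times(-\mathbb{N}\cup\{0\})$.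
   Context: $\mathscr{P}_{\mathbb{T}^2}$: Borel probability measures on $\mathbb{T}^2$; $m_{p,q}(\nu)=\int s_1^ps_2^q\,d\nu$; convention $0^0=1$. The distribution of commuting unitaries $(u,v)$ in a $C^*$-probability space $(\mathcal{A},\varphi)$ is the $\nu$ with $m_{p,q}(\nu)=\varphi(u^pv^q)$. $\nu_1\boxtimes\boxtimes\nu_2$ is the distribution of $(u_1u_2,v_1v_2)$, where $(u_1,v_1),(u_2,v_2)$ are bi-free (Voiculescu) bipartite pairs of unitaries (each $u_i$ commutes with each $v_j$) with distributions $\nu_1,\nu_2$. $\nu^\star$ is the push-forward under $(s_1,s_2)\mapsto(s_1,1/s_2)$ and $\nu_1\boxtimes\boxtimes^{\mathrm{op}}\nu_2=(\nu_1^\star\boxtimes\boxtimes\nu_2^\star)^\star$. A measure $\mu$ is a $\boxtimes\boxtimes$-factor of $\nu$ if $\nu=\mu\boxtimes\boxtimes\mu''$ for some $\mu''\in\mathscr{P}_{\mathbb{T}^2}$ (similarly for $\boxtimes\boxtimes^{\mathrm{op}}$). $\mathrm{m}$ is normalized Haar measure on $\mathbb{T}$ and $P(B)=\mathrm{m}(\{s:(s,\bar s)\in B\})$. *)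

theory Defs
  imports "HOL-Probability.Probability"
begin

type_synonym m2 = "(complex \<times> complex) measure"

definition torus2 :: "(complex \<times> complex) set" where
  "torus2 = {z. cmod (fst z) = 1 \<and> cmod (snd z) = 1}"

definition PT2 :: "m2 \<Rightarrow> bool" where
  "PT2 \<nu> \<longleftrightarrow> prob_space \<nu> \<and> sets \<nu> = sets (borel :: m2) \<and> emeasure \<nu> (UNIV - torus2) = 0"

definition tmom :: "m2 \<Rightarrow> int \<Rightarrow> int \<Rightarrow> complex" where
  "tmom \<nu> p q = (\<integral>z. (fst z) powi p * (snd z) powi q \<partial>\<nu>)"

definition haarT :: "complex measure" where
  "haarT = distr (restrict_space lborel {0..1::real}) borel (\<lambda>t. cis (2 * pi * t))"

definition delta1 :: "complex measure" where
  "delta1 = return borel 1"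

definition marg1 :: "m2 \<Rightarrow> complex measure" where
  "marg1 \<nu> = distr \<nu> borel fst"

definition marg2 :: "m2 \<Rightarrow> complex measure" where
  "marg2 \<nu> = distr \<nu> borel snd"

definition Pmeas :: m2 where
  "Pmeas = distr haarT borel (\<lambda>s. (s, cnj s))"

definition tstar :: "m2 \<Rightarrow> m2" where
  "tstar \<nu> = distr \<nu> borel (\<lambda>z. (fst z, inverse (snd z)))"

text \<open>Vectors of L^2(nu) are represented by Laurent polynomials in (s1,s2), given as
  formal finite sums (list of (exponent, coefficient)).  The state vector xi is the
  constant 1.  Pairing with xi is integration against nu.\<close>

type_synonym lpoly = "((int \<times> int) \<times> complex) list"

definition lexp :: "m2 \<Rightarrow> lpoly \<Rightarrow> complex" where
  "lexp \<nu> f = (\<Sum>t\<leftarrow>f. snd t * tmom \<nu> (fst (fst t)) (snd (fst t)))"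

definition lshift :: "int \<times> int \<Rightarrow> lpoly \<Rightarrow> lpoly" where
  "lshift k f = map (\<lambda>t. ((fst (fst t) + fst k, snd (fst t) + snd k), snd t)) f"

text \<open>Centering: projection onto the orthogonal complement of xi.\<close>
definition lcenter :: "m2 \<Rightarrow> lpoly \<Rightarrow> lpoly" where
  "lcenter \<nu> f = f @ [((0, 0), - lexp \<nu> f)]"

text \<open>Simple tensors of the reduced free product (H,xi) = (H_1,xi_1) * (H_2,xi_2):
  alternating words of centred vectors; index True = 1, False = 2.  The empty word is xi.\<close>
type_synonym fword = "(bool \<times> lpoly) list"
type_synonym fvec = "(complex \<times> fword) list"

text \<open>Left regular action lambda_i(T) for T = multiplication by s1^a s2^b on H_i.\<close>
fun lam_word :: "(bool \<Rightarrow> m2) \<Rightarrow> bool \<Rightarrow> int \<times> int \<Rightarrow> fword \<Rightarrow> fvec" where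
  "lam_word N i k [] =
     [(lexp (N i) [(k, 1)], []), (1, [(i, lcenter (N i) [(k, 1)])])]"
| "lam_word N i k ((j, x) # w) =
     (if j = i then
        [(lexp (N i) (lshift k x), w), (1, (i, lcenter (N i) (lshift k x)) # w)]
      else
        [(lexp (N i) [(k, 1)], (j, x) # w), (1, (i, lcenter (N i) [(k, 1)]) # (j, x) # w)])"

text \<open>Right action rho_i(T): the same, acting on the last tensor factor.\<close>
definition rho_word :: "(bool \<Rightarrow> m2) \<Rightarrow> bool \<Rightarrow> int \<times> int \<Rightarrow> fword \<Rightarrow> fvec" where
  "rho_word N i k w = map (\<lambda>t. (fst t, rev (snd t))) (lam_word N i k (rev w))"

definition vapply :: "(fword \<Rightarrow> fvec) \<Rightarrow> fvec \<Rightarrow> fvec" where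
  "vapply op v = concat (map (\<lambda>t. map (\<lambda>s. (fst t * fst s, snd s)) (op (snd t))) v)"

definition vac :: "fvec \<Rightarrow> complex" where
  "vac v = (\<Sum>t\<leftarrow>v. if snd t = [] then fst t else 0)"

text \<open>phi(u^p v^q) for u = lambda_1(u_1) lambda_2(u_2), v = rho_1(v_1) rho_2(v_2), where
  (u_i,v_i) = (mult by s1, mult by s2) on L^2(nu_i); the pairs (lambda_i(u_i), rho_i(v_i))
  are bi-free with distributions nu_i.\<close>
definition fock_moment :: "(bool \<Rightarrow> m2) \<Rightarrow> int \<Rightarrow> int \<Rightarrow> complex" where
  "fock_moment N p q =
    (let vstep = (if q \<ge> 0 then vapply (rho_word N True (0, 1)) \<circ> vapply (rho_word N False (0, 1))
                  else vapply (rho_word N False (0, -1)) \<circ> vapply (rho_word N True (0, -1)));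
         ustep = (if p \<ge> 0 then vapply (lam_word N True (1, 0)) \<circ> vapply (lam_word N False (1, 0))
                  else vapply (lam_word N False (-1, 0)) \<circ> vapply (lam_word N True (-1, 0)))
     in vac ((ustep ^^ nat \<bar>p\<bar>) ((vstep ^^ nat \<bar>q\<bar>) [(1, [])])))"

text \<open>nu = nu1 boxtimes-boxtimes nu2 (measures on T^2 are determined by their moments).\<close>
definition bbconv :: "m2 \<Rightarrow> m2 \<Rightarrow> m2 \<Rightarrow> bool" where
  "bbconv \<nu>1 \<nu>2 \<nu> \<longleftrightarrow> PT2 \<nu> \<and>
     (\<forall>p q. tmom \<nu> p q = fock_moment (\<lambda>i. if i then \<nu>1 else \<nu>2) p q)"

definition bbconv_op :: "m2 \<Rightarrow> m2 \<Rightarrow> m2 \<Rightarrow> bool" where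
  "bbconv_op \<nu>1 \<nu>2 \<nu> \<longleftrightarrow> PT2 \<nu> \<and> (\<exists>\<sigma>. bbconv (tstar \<nu>1) (tstar \<nu>2) \<sigma> \<and> \<nu> = tstar \<sigma>)"

definition bb_factor :: "m2 \<Rightarrow> m2 \<Rightarrow> bool" where
  "bb_factor \<mu> \<nu> \<longleftrightarrow> (\<exists>\<mu>''. PT2 \<mu>'' \<and> bbconv \<mu> \<mu>'' \<nu>)"

definition bbop_factor :: "m2 \<Rightarrow> m2 \<Rightarrow> bool" where
  "bbop_factor \<mu> \<nu> \<longleftrightarrow> (\<exists>\<mu>''. PT2 \<mu>'' \<and> bbconv_op \<mu> \<mu>'' \<nu>)"

end

theory Submission
  imports Defs
begin

text \<open>The bi-free convolution is computed in the reduced free product of the L^2 spaces of the two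
  factors, modelled by finite combinations of alternating words of Laurent polynomials; \<open>u\<close> acts at
  the left end of a word and \<open>v\<close> at the right end.  For each of the four factors \<open>\<mu>\<close> the moments
  of \<open>\<mu> \<boxtimes>\<boxtimes> \<mu>''\<close> are an idempotent function \<open>\<Phi>\<close> of the moments of \<open>\<mu>''\<close>.  If \<open>\<mu>\<close> is Haar
  in a coordinate, the corresponding operator creates a first-factor letter orthogonal to a
  half-plane of monomials, which no later operator removes, so the vacuum coefficient vanishes; if
  \<open>\<mu>\<close> is trivial in a coordinate, the first factor drops out.  For \<open>P\<close>, \<open>u\<close> and \<open>v\<close> commute,
  \<open>(uv)\<^sup>k \<xi>\<close> has vacuum coefficient \<open>m\<^sub>1\<^sub>1\<^sup>k\<close>, and a surplus power of \<open>u\<close> or \<open>v\<close> leaves an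
  orthogonal letter at one end of every word.  Hence \<open>\<nu>\<close> has the factor \<open>\<mu>\<close> iff its moments are
  fixed by \<open>\<Phi>\<close>; measures on the torus are determined by their moments (Stone-Weierstrass), and the
  \<open>op\<close> versions reduce to the plain ones through the involution \<open>\<star>\<close>.\<close>

section \<open>Laurent polynomials as vectors of L^2\<close>

definition lsmult :: "complex \<Rightarrow> lpoly \<Rightarrow> lpoly" where
  "lsmult c f = map (\<lambda>t. (fst t, c * snd t)) f"

lemma lexp_Nil[simp]: "lexp \<nu> [] = 0"
  by (simp add: lexp_def)

lemma lexp_Cons[simp]: "lexp \<nu> (t # f) = snd t * tmom \<nu> (fst (fst t)) (snd (fst t)) + lexp \<nu> f"
  by (simp add: lexp_def)

lemma lexp_append[simp]: "lexp \<nu> (f @ g) = lexp \<nu> f + lexp \<nu> g"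
  by (simp add: lexp_def)

lemma lexp_lsmult[simp]: "lexp \<nu> (lsmult c f) = c * lexp \<nu> f"
  by (induction f) (auto simp: lsmult_def algebra_simps)

lemma lsmult_Nil[simp]: "lsmult c [] = []"
  by (simp add: lsmult_def)

lemma lsmult_1[simp]: "lsmult 1 f = f"
  by (simp add: lsmult_def)

lemma lshift_Nil[simp]: "lshift k [] = []"
  by (simp add: lshift_def)

lemma lshift_Cons[simp]:
  "lshift k (t # f) = ((fst (fst t) + fst k, snd (fst t) + snd k), snd t) # lshift k f"
  by (simp add: lshift_def)

lemma lshift_append[simp]: "lshift k (f @ g) = lshift k f @ lshift k g"
  by (simp add: lshift_def)

lemma lshift_lsmult[simp]: "lshift k (lsmult c f) = lsmult c (lshift k f)"
  by (simp add: lshift_def lsmult_def)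

lemma lshift_lshift[simp]: "lshift k (lshift k' f) = lshift (fst k' + fst k, snd k' + snd k) f"
  by (induction f) (auto simp: add.assoc)

lemma lexp_lshift_lcenter:
  "lexp \<nu> (lshift k (lcenter \<nu> x)) = lexp \<nu> (lshift k x) - lexp \<nu> x * tmom \<nu> (fst k) (snd k)"
  by (simp add: lcenter_def)

text \<open>Since Laurent polynomials are dense in L^2 of a measure on the torus, two of them are equal
  in L^2 iff they have the same inner products with all monomials.\<close>

definition l2_eq :: "m2 \<Rightarrow> lpoly \<Rightarrow> lpoly \<Rightarrow> bool" where
  "l2_eq \<nu> x y \<longleftrightarrow> (\<forall>k. lexp \<nu> (lshift k x) = lexp \<nu> (lshift k y))"

definition l2_null :: "m2 \<Rightarrow> lpoly \<Rightarrow> bool" where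
  "l2_null \<nu> x \<longleftrightarrow> (\<forall>k. lexp \<nu> (lshift k x) = 0)"

lemma l2_eq_refl[simp]: "l2_eq \<nu> x x"
  by (simp add: l2_eq_def)

lemma l2_eq_lcenter_lshift:
  assumes "l2_eq \<nu> x y"
  shows "l2_eq \<nu> (lcenter \<nu> (lshift k x)) (lcenter \<nu> (lshift k y))"
proof -
  have "lexp \<nu> (lshift k x) = lexp \<nu> (lshift k y)"
    using assms unfolding l2_eq_def by blast
  moreover have "\<And>k'. lexp \<nu> (lshift k' (lshift k x)) = lexp \<nu> (lshift k' (lshift k y))"
    using assms unfolding l2_eq_def lshift_lshift by blast
  ultimately show ?thesis
    unfolding l2_eq_def lexp_lshift_lcenter by simp
qed

lemma l2_eq_lcenter_lshift_add:
  "l2_eq \<nu> (lcenter \<nu> (lshift k (x @ lsmult c y)))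
     (lcenter \<nu> (lshift k x) @ lsmult c (lcenter \<nu> (lshift k y)))"
  unfolding l2_eq_def by (simp add: lcenter_def algebra_simps)

lemma l2_eq_lcenter_lshift_lcenter:
  "l2_eq \<nu> (lsmult (lexp \<nu> (lshift k' x)) (lcenter \<nu> [(k, 1)]) @ lcenter \<nu> (lshift k (lcenter \<nu> (lshift k' x))))
     (lcenter \<nu> (lshift (fst k + fst k', snd k + snd k') x))"
  unfolding l2_eq_def by (simp add: lcenter_def algebra_simps)

lemma l2_null_lcenter_lshift:
  assumes "\<And>k. lexp \<nu> (lshift k x) = 0"
  shows "l2_null \<nu> (lcenter \<nu> (lshift k' x))"
  using assms by (simp add: l2_null_def lexp_lshift_lcenter)


section \<open>The reduced free product\<close>

text \<open>Two formal vectors are identified when every functional that is well defined on simple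
  tensors (it respects L^2 equality in each letter) and linear in each letter takes the same value
  on them.\<close>

definition word_eq :: "(bool \<Rightarrow> m2) \<Rightarrow> fword \<Rightarrow> fword \<Rightarrow> bool" where
  "word_eq N w w' \<longleftrightarrow> list_all2 (\<lambda>a b. fst a = fst b \<and> l2_eq (N (fst a)) (snd a) (snd b)) w w'"

definition fock_functional :: "(bool \<Rightarrow> m2) \<Rightarrow> (fword \<Rightarrow> complex) \<Rightarrow> bool" where
  "fock_functional N g \<longleftrightarrow> (\<forall>w w'. word_eq N w w' \<longrightarrow> g w = g w') \<and>
     (\<forall>u i x y c s. g (u @ (i, x @ lsmult c y) # s) = g (u @ (i, x) # s) + c * g (u @ (i, y) # s))"

definition lin_ext :: "(fword \<Rightarrow> complex) \<Rightarrow> fvec \<Rightarrow> complex" where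
  "lin_ext g v = (\<Sum>t\<leftarrow>v. fst t * g (snd t))"

definition fock_eq :: "(bool \<Rightarrow> m2) \<Rightarrow> fvec \<Rightarrow> fvec \<Rightarrow> bool" where
  "fock_eq N v v' \<longleftrightarrow> (\<forall>g. fock_functional N g \<longrightarrow> lin_ext g v = lin_ext g v')"

lemma word_eq_refl[simp]: "word_eq N w w"
  by (induction w) (auto simp: word_eq_def)

lemma word_eq_Nil_left[simp]: "word_eq N [] w \<longleftrightarrow> w = []"
  by (simp add: word_eq_def)

lemma word_eq_Cons_Cons[simp]:
  "word_eq N (a # w) (b # w') \<longleftrightarrow> fst a = fst b \<and> l2_eq (N (fst a)) (snd a) (snd b) \<and> word_eq N w w'"
  by (simp add: word_eq_def)

lemma word_eq_Cons_left:
  "word_eq N (a # w) w' \<longleftrightarrow>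
     (\<exists>b r. w' = b # r \<and> fst a = fst b \<and> l2_eq (N (fst a)) (snd a) (snd b) \<and> word_eq N w r)"
  by (cases w') (auto simp: word_eq_def)

lemma word_eq_append: "word_eq N u u' \<Longrightarrow> word_eq N s s' \<Longrightarrow> word_eq N (u @ s) (u' @ s')"
  by (simp add: word_eq_def list_all2_appendI)

lemma word_eq_rev: "word_eq N w w' \<Longrightarrow> word_eq N (rev w) (rev w')"
  by (simp add: word_eq_def list_all2_rev)

lemma lin_ext_Nil[simp]: "lin_ext g [] = 0"
  by (simp add: lin_ext_def)

lemma lin_ext_Cons[simp]: "lin_ext g (t # v) = fst t * g (snd t) + lin_ext g v"
  by (simp add: lin_ext_def)

lemma lin_ext_append[simp]: "lin_ext g (v @ v') = lin_ext g v + lin_ext g v'"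
  by (simp add: lin_ext_def)

lemma lin_ext_cmult: "lin_ext (\<lambda>w. c * h w) v = c * lin_ext h v"
  by (induction v) (auto simp: algebra_simps)

lemma vapply_Nil[simp]: "vapply op [] = []"
  by (simp add: vapply_def)

lemma vapply_Cons: "vapply op (t # v) = map (\<lambda>s. (fst t * fst s, snd s)) (op (snd t)) @ vapply op v"
  by (simp add: vapply_def)

lemma vapply_append[simp]: "vapply op (v @ v') = vapply op v @ vapply op v'"
  by (simp add: vapply_def)

lemma vapply_single[simp]: "vapply op [(1, w)] = op w"
  by (simp add: vapply_def)

lemma lin_ext_vapply: "lin_ext g (vapply op v) = lin_ext (\<lambda>w. lin_ext g (op w)) v"
proof (induction v)
  case (Cons t v)
  have "lin_ext g (map (\<lambda>s. (fst t * fst s, snd s)) xs) = fst t * lin_ext g xs" for xs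
    by (induction xs) (auto simp: algebra_simps)
  then show ?case
    using Cons by (simp add: vapply_Cons)
qed simp

lemma vapply_vapply: "vapply op2 (vapply op1 v) = vapply (\<lambda>w. vapply op2 (op1 w)) v"
proof (induction v)
  case (Cons t v)
  have "vapply op (map (\<lambda>s. (a * fst s, snd s)) v) = map (\<lambda>s. (a * fst s, snd s)) (vapply op v)"
    for op a and v :: fvec
    by (induction v) (auto simp: vapply_Cons mult.assoc)
  then show ?case
    using Cons by (simp add: vapply_Cons)
qed simp

definition vac_word :: "fword \<Rightarrow> complex" where
  "vac_word w = (if w = [] then 1 else 0)"

lemma vac_eq_lin_ext: "vac v = lin_ext vac_word v"
  by (induction v) (auto simp: vac_def vac_word_def)

lemma fock_functional_vac_word: "fock_functional N vac_word"
  unfolding fock_functional_def vac_word_def word_eq_def by (auto dest: list_all2_lengthD)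

lemma fock_eq_vac: "fock_eq N v v' \<Longrightarrow> vac v = vac v'"
  by (simp add: fock_eq_def vac_eq_lin_ext fock_functional_vac_word)

lemma fock_eq_refl[simp]: "fock_eq N v v"
  by (simp add: fock_eq_def)

lemma fock_eq_sym: "fock_eq N v v' \<Longrightarrow> fock_eq N v' v"
  by (simp add: fock_eq_def)

lemma fock_eq_trans[trans]: "fock_eq N u v \<Longrightarrow> fock_eq N v w \<Longrightarrow> fock_eq N u w"
  by (simp add: fock_eq_def)

context
  fixes N g
  assumes g: "fock_functional N g"
begin

lemma fock_functional_cong: "word_eq N w w' \<Longrightarrow> g w = g w'"
  using g by (simp add: fock_functional_def)

lemma fock_functional_add_letter:
  "g (u @ (i, x @ lsmult c y) # s) = g (u @ (i, x) # s) + c * g (u @ (i, y) # s)"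
  using g by (simp add: fock_functional_def)

lemma fock_functional_Nil_letter: "g (u @ (i, []) # s) = 0"
  using fock_functional_add_letter[of u i "[]" 1 "[]" s] by simp

lemma fock_functional_append_letter: "g (u @ (i, x @ y) # s) = g (u @ (i, x) # s) + g (u @ (i, y) # s)"
  using fock_functional_add_letter[of u i x 1 y s] by simp

lemma fock_functional_lsmult_letter: "g (u @ (i, lsmult c x) # s) = c * g (u @ (i, x) # s)"
  using fock_functional_add_letter[of u i "[]" c x s] fock_functional_Nil_letter by simp

lemma fock_functional_l2_eq_letter:
  "l2_eq (N i) x y \<Longrightarrow> g (u @ (i, x) # s) = g (u @ (i, y) # s)"
  by (intro fock_functional_cong word_eq_append) auto

lemma fock_functional_l2_null_letter: "l2_null (N i) x \<Longrightarrow> g (u @ (i, x) # s) = 0"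
  using fock_functional_l2_eq_letter[of i x "[]" u s] fock_functional_Nil_letter
  by (simp add: l2_eq_def l2_null_def)

end

lemma fock_functional_rev:
  assumes "fock_functional N g"
  shows "fock_functional N (g \<circ> rev)"
  using fock_functional_cong[OF assms word_eq_rev] fock_functional_add_letter[OF assms, of "rev s" for s]
  unfolding fock_functional_def by simp


section \<open>The left and right regular actions\<close>

lemma lam_word_Cons: "lam_word N i k (a # r) = map (\<lambda>t. (fst t, snd t @ r)) (lam_word N i k [a])"
  by (cases a) auto

lemma lam_word_append:
  assumes "x \<noteq> []"
  shows "lam_word N i k (x @ s) = map (\<lambda>t. (fst t, snd t @ s)) (lam_word N i k x)"
proof -
  obtain a r where "x = a # r"
    using assms by (cases x) auto
  then show ?thesis
    using lam_word_Cons[of N i k a "r @ s"] lam_word_Cons[of N i k a r] by simp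
qed

lemma rho_word_Nil: "rho_word N i k [] = lam_word N i k []"
  by (simp add: rho_word_def)

lemma rho_word_single:
  "rho_word N i k [(j, x)] = (if j = i then
     [(lexp (N i) (lshift k x), []), (1, [(i, lcenter (N i) (lshift k x))])]
   else
     [(lexp (N i) [(k, 1)], [(j, x)]), (1, [(j, x), (i, lcenter (N i) [(k, 1)])])])"
  by (simp add: rho_word_def)

lemma rho_word_snoc: "rho_word N i k (r @ [b]) = map (\<lambda>t. (fst t, r @ snd t)) (rho_word N i k [b])"
  unfolding rho_word_def by (simp add: lam_word_Cons[of N i k b "rev r"])

lemma rho_word_prepend:
  "w \<noteq> [] \<Longrightarrow> rho_word N i k (p @ w) = map (\<lambda>t. (fst t, p @ snd t)) (rho_word N i k w)"
  unfolding rho_word_def by (simp add: lam_word_append)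

lemma lin_ext_rho_word: "lin_ext g (rho_word N i k w) = lin_ext (g \<circ> rev) (lam_word N i k (rev w))"
  unfolding rho_word_def lin_ext_def by (simp add: o_def)

lemma lin_ext_lam_word_word_eq:
  assumes g: "fock_functional N g" and "word_eq N w w'"
  shows "lin_ext g (lam_word N i k w) = lin_ext g (lam_word N i k w')"
proof (cases w)
  case (Cons a r)
  obtain j x where a: "a = (j, x)"
    by (cases a)
  from assms(2) Cons a obtain y r' where w': "w' = (j, y) # r'" and xy: "l2_eq (N j) x y"
    and rr: "word_eq N r r'"
    by (auto simp: word_eq_Cons_left)
  show ?thesis
  proof (cases "j = i")
    case True
    then have "lexp (N i) (lshift k x) = lexp (N i) (lshift k y)"
      using xy unfolding l2_eq_def by blast
    moreover have "g ((i, lcenter (N i) (lshift k x)) # r) = g ((i, lcenter (N i) (lshift k y)) # r')"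
      using xy True rr by (intro fock_functional_cong[OF g]) (simp add: l2_eq_lcenter_lshift)
    ultimately show ?thesis
      using True fock_functional_cong[OF g rr] by (simp add: Cons a w')
  next
    case False
    have "word_eq N ((j, x) # r) ((j, y) # r')"
      using xy rr by simp
    then have "g ((j, x) # r) = g ((j, y) # r')"
      and "g ((i, lcenter (N i) [(k, 1)]) # (j, x) # r) = g ((i, lcenter (N i) [(k, 1)]) # (j, y) # r')"
      by (auto intro!: fock_functional_cong[OF g])
    then show ?thesis
      using False by (simp add: Cons a w')
  qed
qed (use assms in simp)

lemma lin_ext_lam_word_add_letter:
  assumes g: "fock_functional N g"
  shows "lin_ext g (lam_word N i k (u @ (j, x @ lsmult c y) # s)) =
    lin_ext g (lam_word N i k (u @ (j, x) # s)) + c * lin_ext g (lam_word N i k (u @ (j, y) # s))"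
proof (cases u)
  case Nil
  show ?thesis
  proof (cases "j = i")
    case True
    have "g ((i, lcenter (N i) (lshift k (x @ lsmult c y))) # s) =
          g ((i, lcenter (N i) (lshift k x) @ lsmult c (lcenter (N i) (lshift k y))) # s)"
      using fock_functional_l2_eq_letter[OF g l2_eq_lcenter_lshift_add, of "[]"] by simp
    also have "\<dots> = g ((i, lcenter (N i) (lshift k x)) # s) + c * g ((i, lcenter (N i) (lshift k y)) # s)"
      using fock_functional_add_letter[OF g, of "[]"] by simp
    finally show ?thesis
      using True Nil by (simp add: algebra_simps)
  next
    case False
    then show ?thesis
      using Nil fock_functional_add_letter[OF g, of "[]"]
        fock_functional_add_letter[OF g, of "[(i, lcenter (N i) [(k, 1)])]"]
      by (simp add: algebra_simps)
  qed
next
  case (Cons a u')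
  have "lin_ext g (map (\<lambda>t. (fst t, snd t @ u' @ (j, x @ lsmult c y) # s)) L) =
    lin_ext g (map (\<lambda>t. (fst t, snd t @ u' @ (j, x) # s)) L) +
    c * lin_ext g (map (\<lambda>t. (fst t, snd t @ u' @ (j, y) # s)) L)" for L
    by (induction L) (auto simp: fock_functional_add_letter[OF g, of "_ @ u'", simplified] algebra_simps)
  then show ?thesis
    using Cons lam_word_Cons[of N i k a "u' @ (j, _) # s"] by simp
qed

lemma fock_functional_lam_word:
  assumes "fock_functional N g"
  shows "fock_functional N (\<lambda>w. lin_ext g (lam_word N i k w))"
  unfolding fock_functional_def
  using lin_ext_lam_word_word_eq[OF assms] lin_ext_lam_word_add_letter[OF assms] by blast

lemma fock_functional_rho_word:
  assumes "fock_functional N g"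
  shows "fock_functional N (\<lambda>w. lin_ext g (rho_word N i k w))"
proof -
  have "fock_functional N ((\<lambda>w. lin_ext (g \<circ> rev) (lam_word N i k w)) \<circ> rev)"
    by (intro fock_functional_rev fock_functional_lam_word assms)
  then show ?thesis
    by (simp add: lin_ext_rho_word o_def)
qed

lemma sum_list_swap:
  fixes F :: "'a \<Rightarrow> 'b \<Rightarrow> 'c::comm_monoid_add"
  shows "(\<Sum>x\<leftarrow>xs. \<Sum>y\<leftarrow>ys. F x y) = (\<Sum>y\<leftarrow>ys. \<Sum>x\<leftarrow>xs. F x y)"
proof (induction xs)
  case (Cons a xs)
  have "(\<Sum>y\<leftarrow>ys. F a y + (\<Sum>x\<leftarrow>xs. F x y)) = (\<Sum>y\<leftarrow>ys. F a y) + (\<Sum>y\<leftarrow>ys. \<Sum>x\<leftarrow>xs. F x y)"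
    by (induction ys) (auto simp: ac_simps)
  then show ?case
    using Cons by simp
qed (induction ys; simp)

text \<open>On a word with at least two letters the two actions touch different ends.\<close>

lemma lin_ext_lam_rho_commute_long:
  "lin_ext g (vapply (lam_word N i k) (rho_word N j k' (a # m @ [b]))) =
   lin_ext g (vapply (rho_word N j k') (lam_word N i k (a # m @ [b])))"
proof -
  define L where "L = lam_word N i k [a]"
  define R where "R = rho_word N j k' [b]"
  have l: "lam_word N i k (a # r) = map (\<lambda>t. (fst t, snd t @ r)) L" for r
    unfolding L_def by (rule lam_word_Cons)
  have r: "rho_word N j k' (p @ m @ [b]) = map (\<lambda>t. (fst t, p @ m @ snd t)) R" for p
    using rho_word_snoc[of N j k' "p @ m" b] unfolding R_def by simp
  have "lin_ext g (vapply (lam_word N i k) (rho_word N j k' (a # m @ [b]))) =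
      (\<Sum>t\<leftarrow>R. fst t * (\<Sum>t'\<leftarrow>L. fst t' * g (snd t' @ m @ snd t)))"
    using r[of "[a]"] by (simp only: lin_ext_vapply) (simp add: lin_ext_def l o_def)
  also have "\<dots> = (\<Sum>t\<leftarrow>R. \<Sum>t'\<leftarrow>L. fst t * fst t' * g (snd t' @ m @ snd t))"
    by (simp add: sum_list_const_mult mult.assoc)
  also have "\<dots> = (\<Sum>t'\<leftarrow>L. \<Sum>t\<leftarrow>R. fst t * fst t' * g (snd t' @ m @ snd t))"
    by (rule sum_list_swap)
  also have "\<dots> = (\<Sum>t'\<leftarrow>L. fst t' * (\<Sum>t\<leftarrow>R. fst t * g (snd t' @ m @ snd t)))"
    by (simp add: sum_list_const_mult algebra_simps)
  also have "\<dots> = lin_ext g (vapply (rho_word N j k') (lam_word N i k (a # m @ [b])))"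
    using l[of "m @ [b]"] r by (simp only: lin_ext_vapply) (simp add: lin_ext_def o_def)
  finally show ?thesis .
qed

lemma lin_ext_lam_lam_same_letter:
  assumes g: "fock_functional N g"
  shows "lin_ext g (vapply (lam_word N i k) (lam_word N i k' [(i, x)])) =
    lexp (N i) (lshift (fst k' + fst k, snd k' + snd k) x) * g [] +
    g [(i, lcenter (N i) (lshift (fst k' + fst k, snd k' + snd k) x))]"
proof -
  let ?c = "lexp (N i) (lshift k' x)" and ?X = "lcenter (N i) (lshift k' x)"
  have "?c * g [(i, lcenter (N i) [(k, 1)])] + g [(i, lcenter (N i) (lshift k ?X))] =
      g [(i, lsmult ?c (lcenter (N i) [(k, 1)]) @ lcenter (N i) (lshift k ?X))]"
    using fock_functional_append_letter[OF g, where u = "[]" and s = "[]"]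
      fock_functional_lsmult_letter[OF g, where u = "[]" and s = "[]"]
    by simp
  also have "\<dots> = g [(i, lcenter (N i) (lshift (fst k' + fst k, snd k' + snd k) x))]"
    using fock_functional_l2_eq_letter[OF g l2_eq_lcenter_lshift_lcenter, where u = "[]" and s = "[]"]
    by (simp add: add.commute)
  finally show ?thesis
    by (simp add: vapply_Cons lexp_lshift_lcenter algebra_simps)
qed

lemma lin_ext_lam_lam_same_letter_commute:
  assumes "fock_functional N g"
  shows "lin_ext g (vapply (lam_word N i k) (lam_word N i k' [(i, x)])) =
    lin_ext g (vapply (lam_word N i k') (lam_word N i k [(i, x)]))"
  using lin_ext_lam_lam_same_letter[OF assms, of i k k' x] lin_ext_lam_lam_same_letter[OF assms, of i k' k x]
  by (simp add: add.commute)

lemma lin_ext_lam_rho_commute: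
  assumes g: "fock_functional N g"
  shows "lin_ext g (vapply (lam_word N i k) (rho_word N j k' w)) =
    lin_ext g (vapply (rho_word N j k') (lam_word N i k w))"
proof -
  note same = lin_ext_lam_lam_same_letter_commute[OF g, of i k k']
  have "w = [] \<or> (\<exists>l x. w = [(l, x)]) \<or> (\<exists>a m b. w = a # m @ [b])"
  proof (cases w)
    case (Cons a r)
    then show ?thesis
      by (cases r rule: rev_cases) auto
  qed simp
  then consider "w = []" | l x where "w = [(l, x)]" | a m b where "w = a # m @ [b]"
    by blast
  then show ?thesis
  proof cases
    case 1
    show ?thesis
    proof (cases "i = j")
      case True
      then show ?thesis
        using 1 same[of "[((0, 0), 1)]"] by (simp add: rho_word_Nil rho_word_single vapply_Cons)
    qed (use 1 in \<open>simp add: rho_word_Nil rho_word_single vapply_Cons algebra_simps\<close>)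
  next
    case 2
    show ?thesis
    proof (cases "i = l \<and> j = l")
      case True
      then show ?thesis
        using 2 same[of x] by (simp add: rho_word_Nil rho_word_single vapply_Cons)
    next
      case False
      then show ?thesis
        using 2 rho_word_snoc[of N j k' "[_]"]
        by (cases "i = l"; cases "j = l"; cases "i = j")
          (auto simp: rho_word_Nil rho_word_single vapply_Cons algebra_simps)
    qed
  qed (simp add: lin_ext_lam_rho_commute_long)
qed

lemma fock_eq_lam_rho_commute:
  "fock_eq N (vapply (lam_word N i k) (vapply (rho_word N j k') v))
     (vapply (rho_word N j k') (vapply (lam_word N i k) v))"
  unfolding fock_eq_def lin_ext_vapply by (simp add: lin_ext_lam_rho_commute flip: lin_ext_vapply)

section \<open>The bi-free pair of unitaries\<close>

text \<open>\<open>u_op N\<close> and \<open>v_op N\<close> are the operators \<open>u = \<lambda>\<^sub>1(u\<^sub>1) \<lambda>\<^sub>2(u\<^sub>2)\<close> and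
  \<open>v = \<rho>\<^sub>1(v\<^sub>1) \<rho>\<^sub>2(v\<^sub>2)\<close> of the definition of \<open>fock_moment\<close>; index \<open>True\<close> is the first factor.\<close>

definition u_op :: "(bool \<Rightarrow> m2) \<Rightarrow> fvec \<Rightarrow> fvec" where
  "u_op N = vapply (lam_word N True (1, 0)) \<circ> vapply (lam_word N False (1, 0))"

definition u_inv_op :: "(bool \<Rightarrow> m2) \<Rightarrow> fvec \<Rightarrow> fvec" where
  "u_inv_op N = vapply (lam_word N False (-1, 0)) \<circ> vapply (lam_word N True (-1, 0))"

definition v_op :: "(bool \<Rightarrow> m2) \<Rightarrow> fvec \<Rightarrow> fvec" where
  "v_op N = vapply (rho_word N True (0, 1)) \<circ> vapply (rho_word N False (0, 1))"

definition v_inv_op :: "(bool \<Rightarrow> m2) \<Rightarrow> fvec \<Rightarrow> fvec" where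
  "v_inv_op N = vapply (rho_word N False (0, -1)) \<circ> vapply (rho_word N True (0, -1))"

definition vacuum :: fvec where
  "vacuum = [(1, [])]"

definition u_pow :: "(bool \<Rightarrow> m2) \<Rightarrow> int \<Rightarrow> fvec \<Rightarrow> fvec" where
  "u_pow N p = (if p \<ge> 0 then u_op N else u_inv_op N) ^^ nat \<bar>p\<bar>"

definition v_pow :: "(bool \<Rightarrow> m2) \<Rightarrow> int \<Rightarrow> fvec \<Rightarrow> fvec" where
  "v_pow N q = (if q \<ge> 0 then v_op N else v_inv_op N) ^^ nat \<bar>q\<bar>"

lemma u_pow_nonneg: "0 \<le> p \<Longrightarrow> u_pow N p = u_op N ^^ nat p"
  by (simp add: u_pow_def)

lemma u_pow_neg: "p < 0 \<Longrightarrow> u_pow N p = u_inv_op N ^^ nat (- p)"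
  by (simp add: u_pow_def)

lemma v_pow_nonneg: "0 \<le> q \<Longrightarrow> v_pow N q = v_op N ^^ nat q"
  by (simp add: v_pow_def)

lemma v_pow_neg: "q < 0 \<Longrightarrow> v_pow N q = v_inv_op N ^^ nat (- q)"
  by (simp add: v_pow_def)

lemma fock_moment_eq_vac: "fock_moment N p q = vac (u_pow N p (v_pow N q vacuum))"
  unfolding fock_moment_def Let_def u_op_def u_inv_op_def v_op_def v_inv_op_def vacuum_def u_pow_def v_pow_def
  by simp

definition preserves_fock_eq :: "(bool \<Rightarrow> m2) \<Rightarrow> (fvec \<Rightarrow> fvec) \<Rightarrow> bool" where
  "preserves_fock_eq N f \<longleftrightarrow> (\<forall>v v'. fock_eq N v v' \<longrightarrow> fock_eq N (f v) (f v'))"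

definition fock_commute :: "(bool \<Rightarrow> m2) \<Rightarrow> (fvec \<Rightarrow> fvec) \<Rightarrow> (fvec \<Rightarrow> fvec) \<Rightarrow> bool" where
  "fock_commute N f h \<longleftrightarrow> (\<forall>v. fock_eq N (f (h v)) (h (f v)))"

lemma preserves_fock_eqD: "preserves_fock_eq N f \<Longrightarrow> fock_eq N v v' \<Longrightarrow> fock_eq N (f v) (f v')"
  by (simp add: preserves_fock_eq_def)

lemma preserves_fock_eq_lam_word: "preserves_fock_eq N (vapply (lam_word N i k))"
  by (simp add: preserves_fock_eq_def fock_eq_def lin_ext_vapply fock_functional_lam_word)

lemma preserves_fock_eq_rho_word: "preserves_fock_eq N (vapply (rho_word N i k))"
  by (simp add: preserves_fock_eq_def fock_eq_def lin_ext_vapply fock_functional_rho_word)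

lemma preserves_fock_eq_comp:
  "preserves_fock_eq N f \<Longrightarrow> preserves_fock_eq N h \<Longrightarrow> preserves_fock_eq N (f \<circ> h)"
  by (simp add: preserves_fock_eq_def)

lemma preserves_fock_eq_funpow: "preserves_fock_eq N f \<Longrightarrow> preserves_fock_eq N (f ^^ n)"
  by (induction n) (auto simp: preserves_fock_eq_def)

lemma preserves_fock_eq_ops:
  "preserves_fock_eq N (u_op N)" "preserves_fock_eq N (u_inv_op N)"
  "preserves_fock_eq N (v_op N)" "preserves_fock_eq N (v_inv_op N)"
  by (simp_all add: u_op_def u_inv_op_def v_op_def v_inv_op_def preserves_fock_eq_comp
      preserves_fock_eq_lam_word preserves_fock_eq_rho_word)

lemma preserves_fock_eq_pow: "preserves_fock_eq N (u_pow N p)" "preserves_fock_eq N (v_pow N q)"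
  by (simp_all add: u_pow_def v_pow_def preserves_fock_eq_funpow preserves_fock_eq_ops)

lemma fock_commute_comp_right:
  "preserves_fock_eq N h1 \<Longrightarrow> fock_commute N f h1 \<Longrightarrow> fock_commute N f h2 \<Longrightarrow> fock_commute N f (h1 \<circ> h2)"
  unfolding fock_commute_def preserves_fock_eq_def by (metis comp_apply fock_eq_trans)

lemma fock_commute_comp_left:
  "preserves_fock_eq N f1 \<Longrightarrow> fock_commute N f1 h \<Longrightarrow> fock_commute N f2 h \<Longrightarrow> fock_commute N (f1 \<circ> f2) h"
  unfolding fock_commute_def preserves_fock_eq_def by (metis comp_apply fock_eq_trans)

lemma fock_commute_funpow_right:
  assumes "preserves_fock_eq N h" "fock_commute N f h"
  shows "fock_commute N f (h ^^ n)"
proof (induction n)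
  case (Suc n)
  show ?case
    unfolding funpow.simps(2) using fock_commute_comp_right[OF assms(1,2) Suc] .
qed (simp add: fock_commute_def)

lemma fock_commute_funpow_left:
  assumes "preserves_fock_eq N f" "fock_commute N f h"
  shows "fock_commute N (f ^^ n) h"
proof (induction n)
  case (Suc n)
  show ?case
    unfolding funpow.simps(2) using fock_commute_comp_left[OF assms(1,2) Suc] .
qed (simp add: fock_commute_def)

lemma fock_commute_lam_rho: "fock_commute N (vapply (lam_word N i k)) (vapply (rho_word N j k'))"
  by (simp add: fock_commute_def fock_eq_lam_rho_commute)

lemma fock_commute_u_v: "fock_commute N (u_op N) (v_op N)" "fock_commute N (u_inv_op N) (v_inv_op N)"
  unfolding u_op_def v_op_def u_inv_op_def v_inv_op_def
  by (intro fock_commute_comp_left fock_commute_comp_right preserves_fock_eq_comp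
      preserves_fock_eq_lam_word preserves_fock_eq_rho_word fock_commute_lam_rho)+

lemma fock_eq_funpow_commute:
  assumes u: "preserves_fock_eq N u" and v: "preserves_fock_eq N v" and uv: "fock_commute N u v"
  shows "fock_eq N ((u ^^ n) ((v ^^ n) X)) (((u \<circ> v) ^^ n) X)"
proof (induction n)
  case (Suc n)
  have "fock_eq N ((u ^^ Suc n) ((v ^^ Suc n) X)) (u (v ((u ^^ n) ((v ^^ n) X))))"
    using fock_commute_funpow_left[OF u uv, of n] preserves_fock_eqD[OF u]
    unfolding fock_commute_def by (simp add: fock_eq_sym)
  also have "fock_eq N \<dots> (((u \<circ> v) ^^ Suc n) X)"
    using preserves_fock_eqD[OF preserves_fock_eq_comp[OF u v] Suc]
    by (simp only: funpow.simps(2) comp_def)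
  finally show ?case .
qed simp


section \<open>Invariants of supports\<close>

definition fst_letters :: "fword \<Rightarrow> lpoly list" where
  "fst_letters w = map snd (filter fst w)"

lemma fst_letters_simps[simp]:
  "fst_letters [] = []"
  "fst_letters (a # w) = (if fst a then snd a # fst_letters w else fst_letters w)"
  "fst_letters (w @ w') = fst_letters w @ fst_letters w'"
  by (auto simp: fst_letters_def)

lemma fst_letters_rev[simp]: "fst_letters (rev w) = rev (fst_letters w)"
  by (simp add: fst_letters_def rev_filter rev_map)

definition supp_all :: "(fword \<Rightarrow> bool) \<Rightarrow> fvec \<Rightarrow> bool" where
  "supp_all P v \<longleftrightarrow> (\<forall>t\<in>set v. fst t = 0 \<or> P (snd t))"

lemma supp_all_simps[simp]:
  "supp_all P []"
  "supp_all P (t # v) \<longleftrightarrow> (fst t = 0 \<or> P (snd t)) \<and> supp_all P v"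
  "supp_all P (v @ v') \<longleftrightarrow> supp_all P v \<and> supp_all P v'"
  by (auto simp: supp_all_def)

lemma supp_all_mono: "supp_all P v \<Longrightarrow> (\<And>w. P w \<Longrightarrow> P' w) \<Longrightarrow> supp_all P' v"
  unfolding supp_all_def by blast

lemma supp_all_vapply:
  assumes "supp_all P v" "\<And>w. P w \<Longrightarrow> supp_all P' (op w)"
  shows "supp_all P' (vapply op v)"
  using assms unfolding supp_all_def vapply_def by fastforce

lemma vac_eq_0_if_supp_all_nonempty: "supp_all (\<lambda>w. w \<noteq> []) v \<Longrightarrow> vac v = 0"
  unfolding supp_all_def vac_def by (induction v) auto

lemma supp_all_lam_word_snd:
  "Q (fst_letters w) \<Longrightarrow> supp_all (\<lambda>w. Q (fst_letters w)) (lam_word N False k w)"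
  by (cases w) (auto split: prod.splits)

lemma supp_all_rho_word_snd:
  assumes "Q (fst_letters w)"
  shows "supp_all (\<lambda>w. Q (fst_letters w)) (rho_word N False k w)"
proof -
  have "supp_all (\<lambda>w. (Q \<circ> rev) (fst_letters w)) (lam_word N False k (rev w))"
    by (rule supp_all_lam_word_snd) (use assms in simp)
  then show ?thesis
    unfolding rho_word_def supp_all_def by auto
qed

lemma supp_all_vapply_lam_word_snd:
  "supp_all (\<lambda>w. Q (fst_letters w)) X \<Longrightarrow> supp_all (\<lambda>w. Q (fst_letters w)) (vapply (lam_word N False k) X)"
  by (erule supp_all_vapply) (rule supp_all_lam_word_snd)

lemma supp_all_vapply_rho_word_snd:
  "supp_all (\<lambda>w. Q (fst_letters w)) X \<Longrightarrow> supp_all (\<lambda>w. Q (fst_letters w)) (vapply (rho_word N False k) X)"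
  by (erule supp_all_vapply) (rule supp_all_rho_word_snd)

text \<open>How an action of the first factor changes the sequence of first-factor letters: the head
  letter is either absorbed (with coefficient its moment) or replaced by its centred shift; on any
  other word a new centred monomial is created.\<close>

lemma supp_all_lam_word_fst:
  assumes "Qi (fst_letters w)"
    and absorb: "\<And>x s. Qi (x # s) \<Longrightarrow> lexp (N True) (lshift k x) = 0 \<or> Qo s"
    and modify: "\<And>x s. Qi (x # s) \<Longrightarrow> Qo (lcenter (N True) (lshift k x) # s)"
    and create: "\<And>s. Qi s \<Longrightarrow> (lexp (N True) [(k, 1)] = 0 \<or> Qo s) \<and> Qo (lcenter (N True) [(k, 1)] # s)"
  shows "supp_all (\<lambda>w. Qo (fst_letters w)) (lam_word N True k w)"
proof (cases w)
  case (Cons a r)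
  obtain j x where a: "a = (j, x)"
    by (cases a)
  show ?thesis
    using assms absorb[of x "fst_letters r"] modify[of x "fst_letters r"] create[of "fst_letters r"] Cons a
    by (cases j) auto
qed (use assms create[of "[]"] in auto)

lemma supp_all_rho_word_fst:
  assumes "Qi (fst_letters w)"
    and absorb: "\<And>x s. Qi (s @ [x]) \<Longrightarrow> lexp (N True) (lshift k x) = 0 \<or> Qo s"
    and modify: "\<And>x s. Qi (s @ [x]) \<Longrightarrow> Qo (s @ [lcenter (N True) (lshift k x)])"
    and create: "\<And>s. Qi s \<Longrightarrow> (lexp (N True) [(k, 1)] = 0 \<or> Qo s) \<and> Qo (s @ [lcenter (N True) [(k, 1)]])"
  shows "supp_all (\<lambda>w. Qo (fst_letters w)) (rho_word N True k w)"
proof -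
  have "supp_all (\<lambda>w. (Qo \<circ> rev) (fst_letters w)) (lam_word N True k (rev w))"
    by (rule supp_all_lam_word_fst[where Qi = "Qi \<circ> rev"])
      (use assms absorb[of "rev s" for s] modify[of "rev s" for s] create[of "rev s" for s] in simp_all)
  then show ?thesis
    unfolding rho_word_def supp_all_def by auto
qed

definition annih :: "m2 \<Rightarrow> (int \<Rightarrow> int \<Rightarrow> bool) \<Rightarrow> lpoly \<Rightarrow> bool" where
  "annih A S x \<longleftrightarrow> (\<forall>a b. S a b \<longrightarrow> lexp A (lshift (a, b) x) = 0)"

lemma annih_lexp: "annih A S x \<Longrightarrow> S (fst k) (snd k) \<Longrightarrow> lexp A (lshift k x) = 0"
  unfolding annih_def by (cases k) auto

lemma annih_lcenter_lshift:
  assumes "annih A S x" "S (fst k) (snd k)" "\<And>a b. S a b \<Longrightarrow> S (a + fst k) (b + snd k)"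
  shows "annih A S (lcenter A (lshift k x))"
  unfolding annih_def
proof (intro allI impI)
  fix a b
  assume "S a b"
  then have "lexp A (lshift (fst k + a, snd k + b) x) = 0"
    using assms(1) assms(3)[of a b] unfolding annih_def by (simp add: add.commute)
  then show "lexp A (lshift (a, b) (lcenter A (lshift k x))) = 0"
    by (simp add: lexp_lshift_lcenter annih_lexp[OF assms(1,2)])
qed

lemma l2_null_annih: "l2_null A x \<Longrightarrow> annih A S x"
  unfolding l2_null_def annih_def by auto

text \<open>A first-factor letter orthogonal to the monomials in \<open>S\<close> is never absorbed by an action
  whose exponent lies in \<open>S\<close>, and stays orthogonal if \<open>S\<close> is stable under that exponent.  With
  \<open>C\<close>, words without first-factor letters are admitted too, provided the created monomial is
  itself orthogonal to \<open>S\<close>.\<close>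

abbreviation has_annih :: "(bool \<Rightarrow> m2) \<Rightarrow> (int \<Rightarrow> int \<Rightarrow> bool) \<Rightarrow> fword \<Rightarrow> bool" where
  "has_annih N S w \<equiv> list_ex (annih (N True) S) (fst_letters w)"

lemma supp_all_vapply_fst_annih:
  assumes X: "supp_all (\<lambda>w. has_annih N S w \<or> C \<and> fst_letters w = []) X"
    and S: "S (fst k) (snd k)" "\<And>a b. S a b \<Longrightarrow> S (a + fst k) (b + snd k)"
    and create: "C \<Longrightarrow> lexp (N True) [(k, 1)] = 0 \<and> annih (N True) S (lcenter (N True) [(k, 1)])"
  shows "supp_all (has_annih N S) (vapply (lam_word N True k) X)"
    and "supp_all (has_annih N S) (vapply (rho_word N True k) X)"
proof -
  have absorb: "lexp (N True) (lshift k x) = 0" if "annih (N True) S x" for x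
    using annih_lexp[OF that S(1)] .
  have modify: "annih (N True) S (lcenter (N True) (lshift k x))" if "annih (N True) S x" for x
    using annih_lcenter_lshift[OF that S] .
  show "supp_all (has_annih N S) (vapply (lam_word N True k) X)"
  proof (rule supp_all_vapply[OF X])
    fix w
    assume "has_annih N S w \<or> C \<and> fst_letters w = []"
    then show "supp_all (has_annih N S) (lam_word N True k w)"
    proof
      assume "has_annih N S w"
      then show ?thesis
        by (intro supp_all_lam_word_fst[where Qi = "list_ex (annih (N True) S)"])
          (auto simp: absorb modify)
    qed (intro supp_all_lam_word_fst[where Qi = "\<lambda>s. s = []"]; use create in auto)
  qed
  show "supp_all (has_annih N S) (vapply (rho_word N True k) X)"
  proof (rule supp_all_vapply[OF X])
    fix w
    assume "has_annih N S w \<or> C \<and> fst_letters w = []"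
    then show "supp_all (has_annih N S) (rho_word N True k w)"
    proof
      assume "has_annih N S w"
      then show ?thesis
        by (intro supp_all_rho_word_fst[where Qi = "list_ex (annih (N True) S)"])
          (auto simp: absorb modify)
    qed (intro supp_all_rho_word_fst[where Qi = "\<lambda>s. s = []"]; use create in auto)
  qed
qed

lemma supp_all_u_op_annih:
  assumes "supp_all (\<lambda>w. has_annih N S w \<or> C \<and> fst_letters w = []) X" "S 1 0" "\<And>a b. S a b \<Longrightarrow> S (a + 1) b"
    "C \<Longrightarrow> lexp (N True) [((1, 0), 1)] = 0 \<and> annih (N True) S (lcenter (N True) [((1, 0), 1)])"
  shows "supp_all (has_annih N S) (u_op N X)"
  unfolding u_op_def comp_def
  by (rule supp_all_vapply_fst_annih(1)[where N = N, OF supp_all_vapply_lam_word_snd[OF assms(1)]]) (use assms in auto)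

lemma supp_all_u_inv_op_annih:
  assumes "supp_all (\<lambda>w. has_annih N S w \<or> C \<and> fst_letters w = []) X" "S (-1) 0" "\<And>a b. S a b \<Longrightarrow> S (a - 1) b"
    "C \<Longrightarrow> lexp (N True) [((-1, 0), 1)] = 0 \<and> annih (N True) S (lcenter (N True) [((-1, 0), 1)])"
  shows "supp_all (has_annih N S) (u_inv_op N X)"
  unfolding u_inv_op_def comp_def
  by (rule supp_all_vapply_lam_word_snd, rule supp_all_vapply_fst_annih(1)[where N = N, OF assms(1)]) (use assms in auto)

lemma supp_all_v_op_annih:
  assumes "supp_all (\<lambda>w. has_annih N S w \<or> C \<and> fst_letters w = []) X" "S 0 1" "\<And>a b. S a b \<Longrightarrow> S a (b + 1)"
    "C \<Longrightarrow> lexp (N True) [((0, 1), 1)] = 0 \<and> annih (N True) S (lcenter (N True) [((0, 1), 1)])"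
  shows "supp_all (has_annih N S) (v_op N X)"
  unfolding v_op_def comp_def
  by (rule supp_all_vapply_fst_annih(2)[where N = N, OF supp_all_vapply_rho_word_snd[OF assms(1)]]) (use assms in auto)

lemma supp_all_v_inv_op_annih:
  assumes "supp_all (\<lambda>w. has_annih N S w \<or> C \<and> fst_letters w = []) X" "S 0 (-1)" "\<And>a b. S a b \<Longrightarrow> S a (b - 1)"
    "C \<Longrightarrow> lexp (N True) [((0, -1), 1)] = 0 \<and> annih (N True) S (lcenter (N True) [((0, -1), 1)])"
  shows "supp_all (has_annih N S) (v_inv_op N X)"
  unfolding v_inv_op_def comp_def
  by (rule supp_all_vapply_rho_word_snd, rule supp_all_vapply_fst_annih(2)[where N = N, OF assms(1)]) (use assms in auto)

lemma supp_all_funpow_create: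
  assumes create: "\<And>Y. supp_all (\<lambda>w. Q w \<or> fst_letters w = []) Y \<Longrightarrow> supp_all Q (f Y)"
    and X: "supp_all (\<lambda>w. Q w \<or> fst_letters w = []) X" and "0 < n"
  shows "supp_all Q ((f ^^ n) X)"
  using \<open>0 < n\<close>
proof (induction n)
  case (Suc n)
  have "supp_all (\<lambda>w. Q w \<or> fst_letters w = []) ((f ^^ n) X)"
    using Suc X by (cases n) (auto elim: supp_all_mono)
  then show ?case
    by (simp add: create)
qed simp

lemma supp_all_funpow_keep:
  assumes "\<And>Y. supp_all Q Y \<Longrightarrow> supp_all Q (f Y)" and "supp_all Q X"
  shows "supp_all Q ((f ^^ n) X)"
  by (induction n) (auto intro: assms)

lemma vac_eq_0_if_fst_letters_nonempty: "supp_all (\<lambda>w. fst_letters w \<noteq> []) X \<Longrightarrow> vac X = 0"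
  by (auto intro!: vac_eq_0_if_supp_all_nonempty elim!: supp_all_mono)

lemma vac_funpow_create_eq_0:
  assumes "\<And>Y. supp_all (\<lambda>w. Q (fst_letters w) \<or> fst_letters w = []) Y \<Longrightarrow> supp_all (\<lambda>w. Q (fst_letters w)) (f Y)"
    and "\<And>s. Q s \<Longrightarrow> s \<noteq> []" "supp_all (\<lambda>w. Q (fst_letters w) \<or> fst_letters w = []) X" "0 < n"
  shows "vac ((f ^^ n) X) = 0"
  using supp_all_funpow_create[where Q = "\<lambda>w. Q (fst_letters w)" and f = f, OF assms(1,3,4)] assms(2)
  by (auto intro!: vac_eq_0_if_fst_letters_nonempty elim!: supp_all_mono)

lemma vac_eq_0_if_has_annih: "supp_all (has_annih N S) X \<Longrightarrow> vac X = 0"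
  by (auto intro!: vac_eq_0_if_fst_letters_nonempty elim!: supp_all_mono)


section \<open>Monomials of the second factor\<close>

definition mono2 :: "(bool \<Rightarrow> m2) \<Rightarrow> int \<times> int \<Rightarrow> fvec" where
  "mono2 N e = lam_word N False e []"

lemma vac_mono2: "vac (mono2 N e) = tmom (N False) (fst e) (snd e)"
  by (simp add: mono2_def vac_def)

lemma supp_all_mono2: "supp_all (\<lambda>w. fst_letters w = []) (mono2 N e)"
  by (simp add: mono2_def)

lemma fock_eq_vacuum_mono2:
  assumes "tmom (N False) 0 0 = 1"
  shows "fock_eq N vacuum (mono2 N (0, 0))"
proof -
  have "l2_null (N False) (lcenter (N False) [((0, 0), 1)])"
    using assms by (simp add: l2_null_def lexp_lshift_lcenter)
  then show ?thesis
    using assms fock_functional_l2_null_letter[where u = "[]" and s = "[]"]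
    by (simp add: fock_eq_def vacuum_def mono2_def)
qed

lemma fock_eq_lam_word_snd_mono2:
  "fock_eq N (vapply (lam_word N False k) (mono2 N e)) (mono2 N (fst e + fst k, snd e + snd k))"
  unfolding fock_eq_def
  using lin_ext_lam_lam_same_letter[of N _ False k e "[((0, 0), 1)]"] by (simp add: mono2_def)

lemma fock_eq_rho_word_snd_mono2:
  "fock_eq N (vapply (rho_word N False k) (mono2 N e)) (mono2 N (fst e + fst k, snd e + snd k))"
  using fock_eq_lam_word_snd_mono2
  by (simp add: mono2_def vapply_Cons rho_word_Nil rho_word_single)

text \<open>The first factor acts trivially through \<open>s\<^sup>k\<close> when \<open>s\<^sup>k = 1\<close> in its L^2.\<close>

definition fst_trivial :: "(bool \<Rightarrow> m2) \<Rightarrow> int \<times> int \<Rightarrow> bool" where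
  "fst_trivial N k \<longleftrightarrow> tmom (N True) (fst k) (snd k) = 1 \<and> l2_null (N True) (lcenter (N True) [(k, 1)])"

lemma fock_eq_lam_word_fst_mono2:
  assumes "fst_trivial N k"
  shows "fock_eq N (vapply (lam_word N True k) (mono2 N e)) (mono2 N e)"
proof -
  have null: "g ((True, lcenter (N True) [(k, 1)]) # s) = 0" if "fock_functional N g" for g s
    using fock_functional_l2_null_letter[OF that, where u = "[]"] assms
    unfolding fst_trivial_def by simp
  show ?thesis
    using assms unfolding fock_eq_def fst_trivial_def by (auto simp: mono2_def vapply_Cons null)
qed

lemma fock_eq_rho_word_fst_mono2:
  assumes "fst_trivial N k"
  shows "fock_eq N (vapply (rho_word N True k) (mono2 N e)) (mono2 N e)"
proof -
  have null: "g (u @ [(True, lcenter (N True) [(k, 1)])]) = 0" if "fock_functional N g" for g u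
    using fock_functional_l2_null_letter[OF that, where s = "[]"] assms
    unfolding fst_trivial_def by simp
  show ?thesis
    using assms unfolding fock_eq_def fst_trivial_def
    by (auto simp: mono2_def vapply_Cons rho_word_Nil rho_word_single
        null[where u = "[]", simplified] null[where u = "[_]", simplified])
qed

lemma fst_trivial_if_moments:
  assumes "\<And>a b. tmom (N True) (a + fst k) (b + snd k) = tmom (N True) a b" "tmom (N True) 0 0 = 1"
  shows "fst_trivial N k"
  using assms(1)[of 0 0] assms
  by (simp add: fst_trivial_def l2_null_def lexp_lshift_lcenter add.commute)

lemma fock_eq_preserves_trans:
  "preserves_fock_eq N f \<Longrightarrow> fock_eq N X Y \<Longrightarrow> fock_eq N (f Y) Z \<Longrightarrow> fock_eq N (f X) Z"
  by (auto dest: preserves_fock_eqD intro: fock_eq_trans)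

lemma fock_eq_u_op_mono2:
  assumes "fst_trivial N (1, 0)"
  shows "fock_eq N (u_op N (mono2 N e)) (mono2 N (fst e + 1, snd e))"
proof -
  have "fock_eq N (vapply (lam_word N False (1, 0)) (mono2 N e)) (mono2 N (fst e + 1, snd e))"
    using fock_eq_lam_word_snd_mono2[of N "(1, 0)" e] by simp
  then show ?thesis
    unfolding u_op_def comp_def
    by (rule fock_eq_preserves_trans[OF preserves_fock_eq_lam_word _ fock_eq_lam_word_fst_mono2[OF assms]])
qed

lemma fock_eq_u_inv_op_mono2:
  assumes "fst_trivial N (-1, 0)"
  shows "fock_eq N (u_inv_op N (mono2 N e)) (mono2 N (fst e - 1, snd e))"
proof -
  have "fock_eq N (vapply (lam_word N False (-1, 0)) (mono2 N e)) (mono2 N (fst e - 1, snd e))"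
    using fock_eq_lam_word_snd_mono2[of N "(-1, 0)" e] by simp
  then show ?thesis
    unfolding u_inv_op_def comp_def
    by (rule fock_eq_preserves_trans[OF preserves_fock_eq_lam_word fock_eq_lam_word_fst_mono2[OF assms]])
qed

lemma fock_eq_v_op_mono2:
  assumes "fst_trivial N (0, 1)"
  shows "fock_eq N (v_op N (mono2 N e)) (mono2 N (fst e, snd e + 1))"
proof -
  have "fock_eq N (vapply (rho_word N False (0, 1)) (mono2 N e)) (mono2 N (fst e, snd e + 1))"
    using fock_eq_rho_word_snd_mono2[of N "(0, 1)" e] by simp
  then show ?thesis
    unfolding v_op_def comp_def
    by (rule fock_eq_preserves_trans[OF preserves_fock_eq_rho_word _ fock_eq_rho_word_fst_mono2[OF assms]])
qed

lemma fock_eq_v_inv_op_mono2: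
  assumes "fst_trivial N (0, -1)"
  shows "fock_eq N (v_inv_op N (mono2 N e)) (mono2 N (fst e, snd e - 1))"
proof -
  have "fock_eq N (vapply (rho_word N False (0, -1)) (mono2 N e)) (mono2 N (fst e, snd e - 1))"
    using fock_eq_rho_word_snd_mono2[of N "(0, -1)" e] by simp
  then show ?thesis
    unfolding v_inv_op_def comp_def
    by (rule fock_eq_preserves_trans[OF preserves_fock_eq_rho_word fock_eq_rho_word_fst_mono2[OF assms]])
qed

lemma fock_eq_funpow_mono2:
  assumes "preserves_fock_eq N f" "\<And>e. fock_eq N (f (mono2 N e)) (mono2 N (fst e + d1, snd e + d2))"
  shows "fock_eq N ((f ^^ n) (mono2 N e)) (mono2 N (fst e + int n * d1, snd e + int n * d2))"
proof (induction n)
  case (Suc n)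
  have "fock_eq N ((f ^^ Suc n) (mono2 N e)) (f (mono2 N (fst e + int n * d1, snd e + int n * d2)))"
    using preserves_fock_eqD[OF assms(1) Suc] by simp
  also have "fock_eq N \<dots> (mono2 N (fst e + int (Suc n) * d1, snd e + int (Suc n) * d2))"
    using assms(2)[of "(fst e + int n * d1, snd e + int n * d2)"] by (simp add: algebra_simps)
  finally show ?case .
qed simp


section \<open>Fock moments for the product factors\<close>

lemma fock_eq_v_pow_vacuum:
  assumes "\<And>a b. tmom (N True) a b = tmom (N True) a 0" "tmom (N True) 0 0 = 1" "tmom (N False) 0 0 = 1"
  shows "fock_eq N (v_pow N q vacuum) (mono2 N (0, q))"
proof -
  have indep: "tmom (N True) a (b + d) = tmom (N True) a b" "tmom (N True) a (b - d) = tmom (N True) a b"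
    for a b d
    using assms(1)[of a "b + d"] assms(1)[of a "b - d"] assms(1)[of a b] by simp_all
  have "fst_trivial N (0, 1)" "fst_trivial N (0, -1)"
    by (rule fst_trivial_if_moments; simp add: indep assms(2))+
  then have step: "fock_eq N ((if q \<ge> 0 then v_op N else v_inv_op N) (mono2 N e))
      (mono2 N (fst e + 0, snd e + (if q \<ge> 0 then 1 else -1)))" for e
    using fock_eq_v_op_mono2 fock_eq_v_inv_op_mono2 by simp
  have "fock_eq N (v_pow N q vacuum) (v_pow N q (mono2 N (0, 0)))"
    by (rule preserves_fock_eqD[OF preserves_fock_eq_pow(2) fock_eq_vacuum_mono2[where N = N, OF assms(3)]])
  also have "fock_eq N \<dots> (mono2 N (0, q))"
    using fock_eq_funpow_mono2[OF _ step, of "nat \<bar>q\<bar>" "(0, 0)"]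
    by (cases "q \<ge> 0") (simp_all add: v_pow_def preserves_fock_eq_ops)
  finally show ?thesis .
qed

lemma fock_eq_u_pow_vacuum:
  assumes "\<And>a b. tmom (N True) a b = tmom (N True) 0 b" "tmom (N True) 0 0 = 1" "tmom (N False) 0 0 = 1"
  shows "fock_eq N (u_pow N p vacuum) (mono2 N (p, 0))"
proof -
  have indep: "tmom (N True) (a + d) b = tmom (N True) a b" "tmom (N True) (a - d) b = tmom (N True) a b"
    for a b d
    using assms(1)[of "a + d" b] assms(1)[of "a - d" b] assms(1)[of a b] by simp_all
  have "fst_trivial N (1, 0)" "fst_trivial N (-1, 0)"
    by (rule fst_trivial_if_moments; simp add: indep assms(2))+
  then have step: "fock_eq N ((if p \<ge> 0 then u_op N else u_inv_op N) (mono2 N e))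
      (mono2 N (fst e + (if p \<ge> 0 then 1 else -1), snd e + 0))" for e
    using fock_eq_u_op_mono2 fock_eq_u_inv_op_mono2 by simp
  have "fock_eq N (u_pow N p vacuum) (u_pow N p (mono2 N (0, 0)))"
    by (rule preserves_fock_eqD[OF preserves_fock_eq_pow(1) fock_eq_vacuum_mono2[where N = N, OF assms(3)]])
  also have "fock_eq N \<dots> (mono2 N (p, 0))"
    using fock_eq_funpow_mono2[OF _ step, of "nat \<bar>p\<bar>" "(0, 0)"]
    by (cases "p \<ge> 0") (simp_all add: u_pow_def preserves_fock_eq_ops)
  finally show ?thesis .
qed

lemma vac_u_pow_eq_0:
  assumes mom: "\<And>a b. a \<noteq> 0 \<Longrightarrow> tmom (N True) a b = 0"
    and X: "supp_all (\<lambda>w. fst_letters w = []) X" and "p \<noteq> 0"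
  shows "vac (u_pow N p X) = 0"
proof (cases "p > 0")
  case True
  have "supp_all (has_annih N (\<lambda>a b. 0 \<le> a)) ((u_op N ^^ nat p) X)"
  proof (rule supp_all_funpow_create)
    show "supp_all (has_annih N (\<lambda>a b. 0 \<le> a)) (u_op N Y)"
      if "supp_all (\<lambda>w. has_annih N (\<lambda>a b. 0 \<le> a) w \<or> fst_letters w = []) Y" for Y
      by (rule supp_all_u_op_annih[where C = True]) (use that in \<open>auto simp: annih_def lexp_lshift_lcenter mom\<close>)
  qed (use True X in \<open>auto elim: supp_all_mono\<close>)
  then show ?thesis
    using True by (simp add: u_pow_nonneg vac_eq_0_if_has_annih)
next
  case False
  have "supp_all (has_annih N (\<lambda>a b. a \<le> 0)) ((u_inv_op N ^^ nat (- p)) X)"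
  proof (rule supp_all_funpow_create)
    show "supp_all (has_annih N (\<lambda>a b. a \<le> 0)) (u_inv_op N Y)"
      if "supp_all (\<lambda>w. has_annih N (\<lambda>a b. a \<le> 0) w \<or> fst_letters w = []) Y" for Y
      by (rule supp_all_u_inv_op_annih[where C = True]) (use that in \<open>auto simp: annih_def lexp_lshift_lcenter mom\<close>)
  qed (use False \<open>p \<noteq> 0\<close> X in \<open>auto elim: supp_all_mono\<close>)
  then show ?thesis
    using False \<open>p \<noteq> 0\<close> by (simp add: u_pow_neg vac_eq_0_if_has_annih)
qed

lemma supp_all_u_pow_keep_annih:
  assumes "S 1 0" "S (-1) 0" "\<And>a b. S a b \<Longrightarrow> S (a + 1) b" "\<And>a b. S a b \<Longrightarrow> S (a - 1) b"
  shows "supp_all (has_annih N S) X \<Longrightarrow> supp_all (has_annih N S) (u_pow N p X)"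
  unfolding u_pow_def
  by (rule supp_all_funpow_keep)
    (auto intro: supp_all_u_op_annih[where C = False] supp_all_u_inv_op_annih[where C = False] assms)

lemma fock_moment_eq_0_snd:
  assumes mom: "\<And>a b. b \<noteq> 0 \<Longrightarrow> tmom (N True) a b = 0" and "q \<noteq> 0"
  shows "fock_moment N p q = 0"
proof (cases "q > 0")
  case True
  have "supp_all (has_annih N (\<lambda>a b. 0 \<le> b)) ((v_op N ^^ nat q) vacuum)"
  proof (rule supp_all_funpow_create)
    show "supp_all (has_annih N (\<lambda>a b. 0 \<le> b)) (v_op N Y)"
      if "supp_all (\<lambda>w. has_annih N (\<lambda>a b. 0 \<le> b) w \<or> fst_letters w = []) Y" for Y
      by (rule supp_all_v_op_annih[where C = True]) (use that in \<open>auto simp: annih_def lexp_lshift_lcenter mom\<close>)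
  qed (use True in \<open>simp_all add: vacuum_def\<close>)
  then have "supp_all (has_annih N (\<lambda>a b. 0 \<le> b)) (u_pow N p (v_pow N q vacuum))"
    using True by (intro supp_all_u_pow_keep_annih) (simp_all add: v_pow_nonneg)
  then show ?thesis
    by (simp add: fock_moment_eq_vac vac_eq_0_if_has_annih)
next
  case False
  have "supp_all (has_annih N (\<lambda>a b. b \<le> 0)) ((v_inv_op N ^^ nat (- q)) vacuum)"
  proof (rule supp_all_funpow_create)
    show "supp_all (has_annih N (\<lambda>a b. b \<le> 0)) (v_inv_op N Y)"
      if "supp_all (\<lambda>w. has_annih N (\<lambda>a b. b \<le> 0) w \<or> fst_letters w = []) Y" for Y
      by (rule supp_all_v_inv_op_annih[where C = True]) (use that in \<open>auto simp: annih_def lexp_lshift_lcenter mom\<close>)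
  qed (use False \<open>q \<noteq> 0\<close> in \<open>simp_all add: vacuum_def\<close>)
  then have "supp_all (has_annih N (\<lambda>a b. b \<le> 0)) (u_pow N p (v_pow N q vacuum))"
    using False \<open>q \<noteq> 0\<close> by (intro supp_all_u_pow_keep_annih) (simp_all add: v_pow_neg)
  then show ?thesis
    by (simp add: fock_moment_eq_vac vac_eq_0_if_has_annih)
qed

lemma fock_moment_haar_fst:
  assumes "\<And>a b. tmom (N True) a b = (if a = 0 then 1 else 0)" "tmom (N False) 0 0 = 1"
  shows "fock_moment N p q = (if p = 0 then tmom (N False) 0 q else 0)"
proof -
  have "fock_eq N (v_pow N q vacuum) (mono2 N (0, q))"
    by (rule fock_eq_v_pow_vacuum) (simp_all add: assms)
  then have "fock_moment N p q = vac (u_pow N p (mono2 N (0, q)))"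
    unfolding fock_moment_eq_vac by (rule fock_eq_vac[OF preserves_fock_eqD[OF preserves_fock_eq_pow(1)]])
  then show ?thesis
    using vac_u_pow_eq_0[of N, OF _ supp_all_mono2] by (simp add: assms(1) vac_mono2 u_pow_def)
qed

lemma fock_moment_haar_snd:
  assumes "\<And>a b. tmom (N True) a b = (if b = 0 then 1 else 0)" "tmom (N False) 0 0 = 1"
  shows "fock_moment N p q = (if q = 0 then tmom (N False) p 0 else 0)"
proof (cases "q = 0")
  case True
  have "fock_eq N (u_pow N p vacuum) (mono2 N (p, 0))"
    by (rule fock_eq_u_pow_vacuum) (simp_all add: assms)
  then show ?thesis
    using True fock_eq_vac by (simp add: fock_moment_eq_vac v_pow_def vac_mono2)
qed (simp add: fock_moment_eq_0_snd assms)

lemma fock_moment_haar_haar: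
  assumes "\<And>a b. tmom (N True) a b = (if a = 0 \<and> b = 0 then 1 else 0)"
  shows "fock_moment N p q = (if p = 0 \<and> q = 0 then 1 else 0)"
proof (cases "q = 0")
  case True
  then show ?thesis
    using vac_u_pow_eq_0[of N vacuum p]
    by (cases "p = 0") (simp_all add: fock_moment_eq_vac assms vacuum_def vac_def u_pow_def v_pow_def)
qed (simp add: fock_moment_eq_0_snd assms)


section \<open>Fock moments for the factor P\<close>

text \<open>For \<open>P\<close>, \<open>(uv)\<^sup>k \<xi>\<close> is a combination of the vacuum and of words whose first and last
  first-factor letters are orthogonal to the monomials below and above the diagonal, respectively;
  \<open>u\<close> cannot absorb such a head and \<open>v\<close> cannot absorb such a tail.\<close>

definition head_annih :: "m2 \<Rightarrow> (int \<Rightarrow> int \<Rightarrow> bool) \<Rightarrow> lpoly list \<Rightarrow> bool" where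
  "head_annih A S s \<longleftrightarrow> s \<noteq> [] \<and> annih A S (hd s)"

definition last_annih :: "m2 \<Rightarrow> (int \<Rightarrow> int \<Rightarrow> bool) \<Rightarrow> lpoly list \<Rightarrow> bool" where
  "last_annih A S s \<longleftrightarrow> s \<noteq> [] \<and> annih A S (last s)"

definition ends_annih :: "m2 \<Rightarrow> (int \<Rightarrow> int \<Rightarrow> bool) \<Rightarrow> (int \<Rightarrow> int \<Rightarrow> bool) \<Rightarrow> lpoly list \<Rightarrow> bool" where
  "ends_annih A Sh Sl s \<longleftrightarrow> head_annih A Sh s \<and> last_annih A Sl s"

lemma l2_null_lcenter_lshift_if_annih:
  assumes "annih A Sh x" "annih A Sl x" "\<And>a b. Sh a b \<or> Sl a b"
  shows "l2_null A (lcenter A (lshift k x))"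
  by (rule l2_null_lcenter_lshift) (use assms annih_lexp in metis)

lemma supp_all_lam_word_ends_annih:
  assumes "ends_annih (N True) Sh Sl (fst_letters w)" "Sh (fst k) (snd k)"
    "\<And>a b. Sh a b \<Longrightarrow> Sh (a + fst k) (b + snd k)" "\<And>a b. Sh a b \<or> Sl a b"
    "annih (N True) Sh (lcenter (N True) [(k, 1)])"
  shows "supp_all (\<lambda>w. ends_annih (N True) Sh Sl (fst_letters w)) (lam_word N True k w)"
proof (rule supp_all_lam_word_fst[where Qi = "ends_annih (N True) Sh Sl", OF assms(1)])
  fix x s
  assume x: "ends_annih (N True) Sh Sl (x # s)"
  then show "lexp (N True) (lshift k x) = 0 \<or> ends_annih (N True) Sh Sl s"
    using annih_lexp[where S = Sh and k = k] assms(2) by (simp add: ends_annih_def head_annih_def)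
  have "annih (N True) Sh (lcenter (N True) (lshift k x))"
    using x annih_lcenter_lshift[where S = Sh and k = k] assms(2,3) by (simp add: ends_annih_def head_annih_def)
  moreover have "annih (N True) Sl (lcenter (N True) (lshift k x))" if "s = []"
  proof (rule l2_null_annih)
    show "l2_null (N True) (lcenter (N True) (lshift k x))"
      using x that assms(4)
      by (intro l2_null_lcenter_lshift_if_annih[of _ Sh _ Sl]) (simp_all add: ends_annih_def head_annih_def last_annih_def)
  qed
  ultimately show "ends_annih (N True) Sh Sl (lcenter (N True) (lshift k x) # s)"
    using x by (cases "s = []") (simp_all add: ends_annih_def head_annih_def last_annih_def)
qed (use assms(5) in \<open>auto simp: ends_annih_def head_annih_def last_annih_def\<close>)

lemma supp_all_rho_word_ends_annih:
  assumes "ends_annih (N True) Sh Sl (fst_letters w)" "Sl (fst k) (snd k)"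
    "\<And>a b. Sl a b \<Longrightarrow> Sl (a + fst k) (b + snd k)" "\<And>a b. Sh a b \<or> Sl a b"
    "annih (N True) Sl (lcenter (N True) [(k, 1)])"
  shows "supp_all (\<lambda>w. ends_annih (N True) Sh Sl (fst_letters w)) (rho_word N True k w)"
proof (rule supp_all_rho_word_fst[where Qi = "ends_annih (N True) Sh Sl", OF assms(1)])
  fix x s
  assume x: "ends_annih (N True) Sh Sl (s @ [x])"
  then show "lexp (N True) (lshift k x) = 0 \<or> ends_annih (N True) Sh Sl s"
    using annih_lexp[where S = Sl and k = k] assms(2) by (simp add: ends_annih_def last_annih_def)
  have "annih (N True) Sl (lcenter (N True) (lshift k x))"
    using x annih_lcenter_lshift[where S = Sl and k = k] assms(2,3) by (simp add: ends_annih_def last_annih_def)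
  moreover have "annih (N True) Sh (lcenter (N True) (lshift k x))" if "s = []"
  proof (rule l2_null_annih)
    show "l2_null (N True) (lcenter (N True) (lshift k x))"
      using x that assms(4)
      by (intro l2_null_lcenter_lshift_if_annih[of _ Sh _ Sl]) (simp_all add: ends_annih_def head_annih_def last_annih_def)
  qed
  ultimately show "ends_annih (N True) Sh Sl (s @ [lcenter (N True) (lshift k x)])"
    using x by (cases "s = []") (simp_all add: ends_annih_def head_annih_def last_annih_def)
qed (use assms(5) in \<open>auto simp: ends_annih_def head_annih_def last_annih_def\<close>)

lemma supp_all_lam_word_head_annih:
  assumes "fst_letters w = [] \<or> head_annih (N True) S (fst_letters w)" "S (fst k) (snd k)"
    "\<And>a b. S a b \<Longrightarrow> S (a + fst k) (b + snd k)"
    "lexp (N True) [(k, 1)] = 0" "annih (N True) S (lcenter (N True) [(k, 1)])"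
  shows "supp_all (\<lambda>w. head_annih (N True) S (fst_letters w)) (lam_word N True k w)"
  by (rule supp_all_lam_word_fst[where Qi = "\<lambda>s. s = [] \<or> head_annih (N True) S s", OF assms(1)])
    (use assms(2-5) annih_lexp[where S = S and k = k] annih_lcenter_lshift[where S = S and k = k] in
      \<open>auto simp: head_annih_def\<close>)

lemma supp_all_rho_word_last_annih:
  assumes "fst_letters w = [] \<or> last_annih (N True) S (fst_letters w)" "S (fst k) (snd k)"
    "\<And>a b. S a b \<Longrightarrow> S (a + fst k) (b + snd k)"
    "lexp (N True) [(k, 1)] = 0" "annih (N True) S (lcenter (N True) [(k, 1)])"
  shows "supp_all (\<lambda>w. last_annih (N True) S (fst_letters w)) (rho_word N True k w)"
  by (rule supp_all_rho_word_fst[where Qi = "\<lambda>s. s = [] \<or> last_annih (N True) S s", OF assms(1)])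
    (use assms(2-5) annih_lexp[where S = S and k = k] annih_lcenter_lshift[where S = S and k = k] in
      \<open>auto simp: last_annih_def\<close>)

lemma lin_ext_cong_supp_all: "supp_all P X \<Longrightarrow> (\<And>w. P w \<Longrightarrow> h w = h' w) \<Longrightarrow> lin_ext h X = lin_ext h' X"
  unfolding supp_all_def lin_ext_def by (induction X) auto

lemma vac_vapply_eq_cmult:
  assumes "supp_all P X" "\<And>w. P w \<Longrightarrow> vac (f w) = c * vac_word w"
  shows "vac (vapply f X) = c * vac X"
proof -
  have "lin_ext (\<lambda>w. vac (f w)) X = lin_ext (\<lambda>w. c * vac_word w) X"
    by (rule lin_ext_cong_supp_all[OF assms(1)]) (rule assms(2))
  then show ?thesis
    by (simp add: lin_ext_vapply lin_ext_cmult vac_eq_lin_ext)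
qed

lemma u_op_v_op_eq_vapply: "u_op N (v_op N X) = vapply (\<lambda>w. u_op N (v_op N [(1, w)])) X"
  by (simp add: u_op_def v_op_def vapply_vapply)

lemma u_inv_op_v_inv_op_eq_vapply: "u_inv_op N (v_inv_op N X) = vapply (\<lambda>w. u_inv_op N (v_inv_op N [(1, w)])) X"
  by (simp add: u_inv_op_def v_inv_op_def vapply_vapply)

definition below_diag :: "int \<Rightarrow> int \<Rightarrow> bool" where
  "below_diag a b \<longleftrightarrow> b \<le> a"

definition above_diag :: "int \<Rightarrow> int \<Rightarrow> bool" where
  "above_diag a b \<longleftrightarrow> a \<le> b"

lemma diag_simps[simp]:
  "below_diag 1 0" "below_diag 0 (-1)" "above_diag 0 1" "above_diag (-1) 0"
  "below_diag a b \<Longrightarrow> below_diag (a + 1) b" "below_diag a b \<Longrightarrow> below_diag a (b - 1)"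
  "below_diag a b \<Longrightarrow> below_diag a (b + - 1)"
  "above_diag a b \<Longrightarrow> above_diag a (b + 1)" "above_diag a b \<Longrightarrow> above_diag (a - 1) b"
  "above_diag a b \<Longrightarrow> above_diag (a + - 1) b"
  "below_diag a b \<or> above_diag a b" "above_diag a b \<or> below_diag a b"
  by (auto simp: below_diag_def above_diag_def)

context
  fixes N :: "bool \<Rightarrow> m2"
  assumes P: "\<And>a b. tmom (N True) a b = (if a = b then 1 else 0)"
begin

lemma annih_P_monomials:
  "annih (N True) below_diag (lcenter (N True) [((1, 0), 1)])"
  "annih (N True) above_diag (lcenter (N True) [((0, 1), 1)])"
  "annih (N True) above_diag (lcenter (N True) [((-1, 0), 1)])"
  "annih (N True) below_diag (lcenter (N True) [((0, -1), 1)])"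
  by (auto simp: annih_def lexp_lshift_lcenter P below_diag_def above_diag_def)

lemma vac_u_op_v_op_vacuum: "vac (u_op N (v_op N vacuum)) = tmom (N False) 1 1"
  by (simp add: u_op_def v_op_def vacuum_def vapply_Cons rho_word_Nil rho_word_single
      rho_word_snoc[of N _ _ "[_]"] P lexp_lshift_lcenter vac_def)

lemma supp_all_u_op_v_op_vacuum:
  "supp_all (\<lambda>w. w = [] \<or> ends_annih (N True) below_diag above_diag (fst_letters w)) (u_op N (v_op N vacuum))"
proof -
  have "l2_null (N True) (lcenter (N True) (lshift (1, 0) (lcenter (N True) [((0, 1), 1)])))"
    by (auto simp: l2_null_def lexp_lshift_lcenter P)
  then show ?thesis
    by (simp add: u_op_def v_op_def vacuum_def vapply_Cons rho_word_Nil rho_word_single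
        rho_word_snoc[of N _ _ "[_]"] P lexp_lshift_lcenter ends_annih_def head_annih_def
        last_annih_def annih_P_monomials l2_null_annih)
qed

lemma vac_u_inv_op_v_inv_op_vacuum: "vac (u_inv_op N (v_inv_op N vacuum)) = tmom (N False) (-1) (-1)"
  by (simp add: u_inv_op_def v_inv_op_def vacuum_def vapply_Cons rho_word_Nil rho_word_single
      rho_word_snoc[of N _ _ "[_]"] P lexp_lshift_lcenter vac_def)

lemma supp_all_u_inv_op_v_inv_op_vacuum:
  "supp_all (\<lambda>w. fst_letters w = [] \<or> ends_annih (N True) above_diag below_diag (fst_letters w))
     (u_inv_op N (v_inv_op N vacuum))"
proof -
  have "l2_null (N True) (lcenter (N True) (lshift (-1, 0) (lcenter (N True) [((0, -1), 1)])))"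
    by (auto simp: l2_null_def lexp_lshift_lcenter P)
  then show ?thesis
    by (simp add: u_inv_op_def v_inv_op_def vacuum_def vapply_Cons rho_word_Nil rho_word_single
        rho_word_snoc[of N _ _ "[_]"] P lexp_lshift_lcenter ends_annih_def head_annih_def
        last_annih_def annih_P_monomials l2_null_annih)
qed

lemma supp_all_ends_annih_pos:
  assumes "supp_all (\<lambda>w. ends_annih (N True) below_diag above_diag (fst_letters w)) X"
  shows "supp_all (\<lambda>w. ends_annih (N True) below_diag above_diag (fst_letters w)) (u_op N X)"
    and "supp_all (\<lambda>w. ends_annih (N True) below_diag above_diag (fst_letters w)) (v_op N X)"
  unfolding u_op_def v_op_def comp_def
  by (rule supp_all_vapply[OF supp_all_vapply_lam_word_snd[OF assms]]
      supp_all_vapply[OF supp_all_vapply_rho_word_snd[OF assms]],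
      rule supp_all_lam_word_ends_annih supp_all_rho_word_ends_annih;
      simp add: annih_P_monomials)+

lemma supp_all_ends_annih_neg:
  assumes "supp_all (\<lambda>w. ends_annih (N True) above_diag below_diag (fst_letters w)) X"
  shows "supp_all (\<lambda>w. ends_annih (N True) above_diag below_diag (fst_letters w)) (u_inv_op N X)"
    and "supp_all (\<lambda>w. ends_annih (N True) above_diag below_diag (fst_letters w)) (v_inv_op N X)"
  unfolding u_inv_op_def v_inv_op_def comp_def
  by (rule supp_all_vapply_lam_word_snd supp_all_vapply_rho_word_snd,
      rule supp_all_vapply[OF assms],
      rule supp_all_lam_word_ends_annih supp_all_rho_word_ends_annih;
      simp add: annih_P_monomials)+

lemma u_op_v_op_step:
  assumes X: "supp_all (\<lambda>w. w = [] \<or> ends_annih (N True) below_diag above_diag (fst_letters w)) X"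
  shows "vac (u_op N (v_op N X)) = tmom (N False) 1 1 * vac X"
    and "supp_all (\<lambda>w. w = [] \<or> ends_annih (N True) below_diag above_diag (fst_letters w)) (u_op N (v_op N X))"
proof -
  have ends: "supp_all (\<lambda>w. ends_annih (N True) below_diag above_diag (fst_letters w)) (u_op N (v_op N [(1, w)]))"
    if "ends_annih (N True) below_diag above_diag (fst_letters w)" for w
    using that by (intro supp_all_ends_annih_pos) simp_all
  show "vac (u_op N (v_op N X)) = tmom (N False) 1 1 * vac X"
    unfolding u_op_v_op_eq_vapply[of N X]
  proof (rule vac_vapply_eq_cmult[OF X])
    fix w
    assume "w = [] \<or> ends_annih (N True) below_diag above_diag (fst_letters w)"
    then show "vac (u_op N (v_op N [(1, w)])) = tmom (N False) 1 1 * vac_word w"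
    proof
      assume w: "ends_annih (N True) below_diag above_diag (fst_letters w)"
      then have "vac (u_op N (v_op N [(1, w)])) = 0"
        by (intro vac_eq_0_if_fst_letters_nonempty supp_all_mono[OF ends])
          (auto simp: ends_annih_def head_annih_def)
      then show ?thesis
        using w by (auto simp: vac_word_def ends_annih_def head_annih_def)
    qed (simp add: vac_u_op_v_op_vacuum[unfolded vacuum_def] vac_word_def)
  qed
  show "supp_all (\<lambda>w. w = [] \<or> ends_annih (N True) below_diag above_diag (fst_letters w)) (u_op N (v_op N X))"
    unfolding u_op_v_op_eq_vapply[of N X]
  proof (rule supp_all_vapply[OF X])
    fix w
    assume "w = [] \<or> ends_annih (N True) below_diag above_diag (fst_letters w)"
    then show "supp_all (\<lambda>w. w = [] \<or> ends_annih (N True) below_diag above_diag (fst_letters w))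
        (u_op N (v_op N [(1, w)]))"
      using supp_all_u_op_v_op_vacuum[unfolded vacuum_def] by (auto intro: supp_all_mono[OF ends])
  qed
qed

lemma u_op_v_op_funpow:
  "vac (((u_op N \<circ> v_op N) ^^ n) vacuum) = tmom (N False) 1 1 ^ n \<and>
   supp_all (\<lambda>w. w = [] \<or> ends_annih (N True) below_diag above_diag (fst_letters w)) (((u_op N \<circ> v_op N) ^^ n) vacuum)"
proof (induction n)
  case (Suc n)
  define Y where "Y = ((u_op N \<circ> v_op N) ^^ n) vacuum"
  have eq: "((u_op N \<circ> v_op N) ^^ Suc n) vacuum = u_op N (v_op N Y)"
    unfolding Y_def by (simp only: funpow.simps(2) comp_apply)
  have IH: "vac Y = tmom (N False) 1 1 ^ n"
    "supp_all (\<lambda>w. w = [] \<or> ends_annih (N True) below_diag above_diag (fst_letters w)) Y"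
    using Suc.IH unfolding Y_def by blast+
  show ?case
    unfolding eq using u_op_v_op_step[OF IH(2)] IH(1) by simp
qed (simp add: vacuum_def vac_def)

text \<open>Unlike in the positive case, \<open>u\<^sup>-\<^sup>1 v\<^sup>-\<^sup>1\<close> also produces words made of second-factor letters only.\<close>

lemma supp_all_u_inv_op_v_inv_op_snd_word:
  assumes "fst_letters w = []" "w \<noteq> []"
  shows "supp_all (\<lambda>w. ends_annih (N True) above_diag below_diag (fst_letters w)) (u_inv_op N (v_inv_op N [(1, w)]))"
proof -
  define c where "c = lcenter (N True) [((0, -1), 1)]"
  obtain y r0 where w: "w = (False, y) # r0" and r0: "fst_letters r0 = []"
    using assms by (cases w) (auto split: if_splits)
  obtain r yl where rb: "w = r @ [(False, yl)]"
    using assms by (cases w rule: rev_cases) (auto split: if_splits)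
  define Q where "Q = (\<lambda>w'. \<exists>r. w' = (False, y) # r \<and> fst_letters r = [c])"
  have "rho_word N True (0, -1) w = [(0, w), (1, w @ [(True, c)])]"
    unfolding rb rho_word_snoc by (simp add: rho_word_single c_def P)
  then have "supp_all Q (vapply (rho_word N True (0, -1)) [(1, w)])"
    using w r0 by (simp add: Q_def)
  then have "supp_all Q (v_inv_op N [(1, w)])"
    unfolding v_inv_op_def comp_def
  proof (rule supp_all_vapply)
    fix w'
    assume "Q w'"
    then obtain r where r: "w' = (False, y) # r" "fst_letters r = [c]"
      unfolding Q_def by blast
    then have "r \<noteq> []"
      by auto
    have "supp_all (\<lambda>w. fst_letters w = [c]) (rho_word N False (0, -1) r)"
      using supp_all_rho_word_snd[of "\<lambda>s. s = [c]"] r by simp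
    then show "supp_all Q (rho_word N False (0, -1) w')"
      using rho_word_prepend[OF \<open>r \<noteq> []\<close>, of N False "(0, -1)" "[(False, y)]"] r
      by (auto simp: Q_def supp_all_def)
  qed
  then have "supp_all (\<lambda>w. ends_annih (N True) above_diag below_diag (fst_letters w))
      (vapply (lam_word N True (-1, 0)) (v_inv_op N [(1, w)]))"
  proof (rule supp_all_vapply)
    fix w'
    assume "Q w'"
    then show "supp_all (\<lambda>w. ends_annih (N True) above_diag below_diag (fst_letters w)) (lam_word N True (-1, 0) w')"
      using annih_P_monomials by (auto simp: Q_def P ends_annih_def head_annih_def last_annih_def c_def)
  qed
  then show ?thesis
    unfolding u_inv_op_def comp_def by (rule supp_all_vapply_lam_word_snd)
qed

lemma u_inv_op_v_inv_op_step:
  assumes X: "supp_all (\<lambda>w. fst_letters w = [] \<or> ends_annih (N True) above_diag below_diag (fst_letters w)) X"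
  shows "vac (u_inv_op N (v_inv_op N X)) = tmom (N False) (-1) (-1) * vac X"
    and "supp_all (\<lambda>w. fst_letters w = [] \<or> ends_annih (N True) above_diag below_diag (fst_letters w))
      (u_inv_op N (v_inv_op N X))"
proof -
  have ends: "supp_all (\<lambda>w. ends_annih (N True) above_diag below_diag (fst_letters w)) (u_inv_op N (v_inv_op N [(1, w)]))"
    if "w \<noteq> []" "fst_letters w = [] \<or> ends_annih (N True) above_diag below_diag (fst_letters w)" for w
  proof (cases "fst_letters w = []")
    case False
    then have "supp_all (\<lambda>w. ends_annih (N True) above_diag below_diag (fst_letters w)) [(1, w)]"
      using that by simp
    then show ?thesis
      by (rule supp_all_ends_annih_neg(1)[OF supp_all_ends_annih_neg(2)])
  qed (use that supp_all_u_inv_op_v_inv_op_snd_word in simp)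
  show "vac (u_inv_op N (v_inv_op N X)) = tmom (N False) (-1) (-1) * vac X"
    unfolding u_inv_op_v_inv_op_eq_vapply[of N X]
  proof (rule vac_vapply_eq_cmult[OF X])
    fix w
    assume w: "fst_letters w = [] \<or> ends_annih (N True) above_diag below_diag (fst_letters w)"
    show "vac (u_inv_op N (v_inv_op N [(1, w)])) = tmom (N False) (-1) (-1) * vac_word w"
    proof (cases "w = []")
      case False
      then have "vac (u_inv_op N (v_inv_op N [(1, w)])) = 0"
        using w by (intro vac_eq_0_if_fst_letters_nonempty supp_all_mono[OF ends])
          (auto simp: ends_annih_def head_annih_def)
      then show ?thesis
        using False by (simp add: vac_word_def)
    qed (simp add: vac_u_inv_op_v_inv_op_vacuum[unfolded vacuum_def] vac_word_def)
  qed
  show "supp_all (\<lambda>w. fst_letters w = [] \<or> ends_annih (N True) above_diag below_diag (fst_letters w))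
      (u_inv_op N (v_inv_op N X))"
    unfolding u_inv_op_v_inv_op_eq_vapply[of N X]
  proof (rule supp_all_vapply[OF X])
    fix w
    assume "fst_letters w = [] \<or> ends_annih (N True) above_diag below_diag (fst_letters w)"
    then show "supp_all (\<lambda>w. fst_letters w = [] \<or> ends_annih (N True) above_diag below_diag (fst_letters w))
        (u_inv_op N (v_inv_op N [(1, w)]))"
      using supp_all_u_inv_op_v_inv_op_vacuum[unfolded vacuum_def]
      by (cases "w = []") (auto intro: supp_all_mono[OF ends])
  qed
qed

lemma u_inv_op_v_inv_op_funpow:
  "vac (((u_inv_op N \<circ> v_inv_op N) ^^ n) vacuum) = tmom (N False) (-1) (-1) ^ n \<and>
   supp_all (\<lambda>w. fst_letters w = [] \<or> ends_annih (N True) above_diag below_diag (fst_letters w))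
     (((u_inv_op N \<circ> v_inv_op N) ^^ n) vacuum)"
proof (induction n)
  case (Suc n)
  define Y where "Y = ((u_inv_op N \<circ> v_inv_op N) ^^ n) vacuum"
  have eq: "((u_inv_op N \<circ> v_inv_op N) ^^ Suc n) vacuum = u_inv_op N (v_inv_op N Y)"
    unfolding Y_def by (simp only: funpow.simps(2) comp_apply)
  have IH: "vac Y = tmom (N False) (-1) (-1) ^ n"
    "supp_all (\<lambda>w. fst_letters w = [] \<or> ends_annih (N True) above_diag below_diag (fst_letters w)) Y"
    using Suc.IH unfolding Y_def by blast+
  show ?case
    unfolding eq using u_inv_op_v_inv_op_step[OF IH(2)] IH(1) by simp
qed (simp add: vacuum_def vac_def)

lemma supp_all_u_op_head_annih:
  "supp_all (\<lambda>w. head_annih (N True) below_diag (fst_letters w) \<or> fst_letters w = []) X \<Longrightarrow>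
   supp_all (\<lambda>w. head_annih (N True) below_diag (fst_letters w)) (u_op N X)"
  unfolding u_op_def comp_def
  by (rule supp_all_vapply[OF supp_all_vapply_lam_word_snd[where Q = "\<lambda>s. head_annih (N True) below_diag s \<or> s = []"]],
      assumption, rule supp_all_lam_word_head_annih) (auto simp: P annih_P_monomials)

lemma supp_all_u_inv_op_head_annih:
  "supp_all (\<lambda>w. head_annih (N True) above_diag (fst_letters w) \<or> fst_letters w = []) X \<Longrightarrow>
   supp_all (\<lambda>w. head_annih (N True) above_diag (fst_letters w)) (u_inv_op N X)"
  unfolding u_inv_op_def comp_def
  by (rule supp_all_vapply_lam_word_snd, rule supp_all_vapply, assumption, rule supp_all_lam_word_head_annih)
    (auto simp: P annih_P_monomials)

lemma supp_all_v_op_last_annih: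
  "supp_all (\<lambda>w. last_annih (N True) above_diag (fst_letters w) \<or> fst_letters w = []) X \<Longrightarrow>
   supp_all (\<lambda>w. last_annih (N True) above_diag (fst_letters w)) (v_op N X)"
  unfolding v_op_def comp_def
  by (rule supp_all_vapply[OF supp_all_vapply_rho_word_snd[where Q = "\<lambda>s. last_annih (N True) above_diag s \<or> s = []"]],
      assumption, rule supp_all_rho_word_last_annih) (auto simp: P annih_P_monomials)

lemma supp_all_v_inv_op_last_annih:
  "supp_all (\<lambda>w. last_annih (N True) below_diag (fst_letters w) \<or> fst_letters w = []) X \<Longrightarrow>
   supp_all (\<lambda>w. last_annih (N True) below_diag (fst_letters w)) (v_inv_op N X)"
  unfolding v_inv_op_def comp_def
  by (rule supp_all_vapply_rho_word_snd, rule supp_all_vapply, assumption, rule supp_all_rho_word_last_annih)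
    (auto simp: P annih_P_monomials)

end

lemma vac_funpow_funpow_vacuum:
  assumes u: "preserves_fock_eq N u" and v: "preserves_fock_eq N v" and uv: "fock_commute N u v"
    and diag: "\<And>k. vac (((u \<circ> v) ^^ k) vacuum) = c ^ k"
    and u_kill: "\<And>k j. 0 < j \<Longrightarrow> vac ((u ^^ j) (((u \<circ> v) ^^ k) vacuum)) = 0"
    and v_kill: "\<And>k j. 0 < j \<Longrightarrow> vac ((v ^^ j) (((u \<circ> v) ^^ k) vacuum)) = 0"
  shows "vac ((u ^^ m) ((v ^^ n) vacuum)) = (if m = n then c ^ n else 0)"
proof -
  have uv_pow: "fock_eq N ((u ^^ k) ((v ^^ k) vacuum)) (((u \<circ> v) ^^ k) vacuum)" for k
    by (rule fock_eq_funpow_commute[OF u v uv])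
  consider "m = n" | "n < m" | "m < n"
    by linarith
  then show ?thesis
  proof cases
    case 1
    then show ?thesis
      using fock_eq_vac[OF uv_pow] diag by simp
  next
    case 2
    have "vac ((u ^^ m) ((v ^^ n) vacuum)) = vac ((u ^^ (m - n)) ((u ^^ n) ((v ^^ n) vacuum)))"
      using 2 funpow_add[of "m - n" n u] by simp
    also have "\<dots> = vac ((u ^^ (m - n)) (((u \<circ> v) ^^ n) vacuum))"
      by (rule fock_eq_vac[OF preserves_fock_eqD[OF preserves_fock_eq_funpow[OF u] uv_pow]])
    finally show ?thesis
      using 2 u_kill by simp
  next
    case 3
    have "vac ((u ^^ m) ((v ^^ n) vacuum)) = vac ((u ^^ m) ((v ^^ (n - m)) ((v ^^ m) vacuum)))"
      using 3 funpow_add[of "n - m" m v] by simp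
    also have "\<dots> = vac ((v ^^ (n - m)) ((u ^^ m) ((v ^^ m) vacuum)))"
      using fock_commute_funpow_right[OF v fock_commute_funpow_left[OF u uv, of m], of "n - m"]
      unfolding fock_commute_def by (blast intro: fock_eq_vac)
    also have "\<dots> = vac ((v ^^ (n - m)) (((u \<circ> v) ^^ m) vacuum))"
      by (rule fock_eq_vac[OF preserves_fock_eqD[OF preserves_fock_eq_funpow[OF v] uv_pow]])
    finally show ?thesis
      using 3 v_kill by simp
  qed
qed

context
  fixes N :: "bool \<Rightarrow> m2"
  assumes P: "\<And>a b. tmom (N True) a b = (if a = b then 1 else 0)"
begin

lemma fock_moment_P_nonneg:
  assumes "0 \<le> p" "0 \<le> q"
  shows "fock_moment N p q = (if p = q then tmom (N False) 1 1 ^ nat p else 0)"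
proof -
  have X: "supp_all (\<lambda>w. Q (fst_letters w) \<or> fst_letters w = []) (((u_op N \<circ> v_op N) ^^ k) vacuum)"
    if "\<And>s. ends_annih (N True) below_diag above_diag s \<Longrightarrow> Q s" for Q k
    using conjunct2[OF u_op_v_op_funpow[where N = N, OF P, of k]] that by (auto elim!: supp_all_mono)
  have "vac ((u_op N ^^ nat p) ((v_op N ^^ nat q) vacuum)) =
      (if nat p = nat q then tmom (N False) 1 1 ^ nat q else 0)"
  proof (rule vac_funpow_funpow_vacuum[OF preserves_fock_eq_ops(1,3) fock_commute_u_v(1)])
    show "vac (((u_op N \<circ> v_op N) ^^ k) vacuum) = tmom (N False) 1 1 ^ k" for k
      using u_op_v_op_funpow[where N = N, OF P] by blast
    show "vac ((u_op N ^^ j) (((u_op N \<circ> v_op N) ^^ k) vacuum)) = 0" if "0 < j" for j k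
      by (rule vac_funpow_create_eq_0[OF supp_all_u_op_head_annih[where N = N, OF P] _ X that])
        (auto simp: head_annih_def ends_annih_def)
    show "vac ((v_op N ^^ j) (((u_op N \<circ> v_op N) ^^ k) vacuum)) = 0" if "0 < j" for j k
      by (rule vac_funpow_create_eq_0[OF supp_all_v_op_last_annih[where N = N, OF P] _ X that])
        (auto simp: last_annih_def ends_annih_def)
  qed
  then show ?thesis
    using assms by (simp add: fock_moment_eq_vac u_pow_nonneg v_pow_nonneg eq_nat_nat_iff)
qed

lemma fock_moment_P_neg:
  assumes "p < 0" "q < 0"
  shows "fock_moment N p q = (if p = q then tmom (N False) (-1) (-1) ^ nat (- p) else 0)"
proof -
  have X: "supp_all (\<lambda>w. Q (fst_letters w) \<or> fst_letters w = []) (((u_inv_op N \<circ> v_inv_op N) ^^ k) vacuum)"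
    if "\<And>s. ends_annih (N True) above_diag below_diag s \<Longrightarrow> Q s" for Q k
    using conjunct2[OF u_inv_op_v_inv_op_funpow[where N = N, OF P, of k]] that by (auto elim!: supp_all_mono)
  have "vac ((u_inv_op N ^^ nat (- p)) ((v_inv_op N ^^ nat (- q)) vacuum)) =
      (if nat (- p) = nat (- q) then tmom (N False) (-1) (-1) ^ nat (- q) else 0)"
  proof (rule vac_funpow_funpow_vacuum[OF preserves_fock_eq_ops(2,4) fock_commute_u_v(2)])
    show "vac (((u_inv_op N \<circ> v_inv_op N) ^^ k) vacuum) = tmom (N False) (-1) (-1) ^ k" for k
      using u_inv_op_v_inv_op_funpow[where N = N, OF P] by blast
    show "vac ((u_inv_op N ^^ j) (((u_inv_op N \<circ> v_inv_op N) ^^ k) vacuum)) = 0" if "0 < j" for j k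
      by (rule vac_funpow_create_eq_0[OF supp_all_u_inv_op_head_annih[where N = N, OF P] _ X that])
        (auto simp: head_annih_def ends_annih_def)
    show "vac ((v_inv_op N ^^ j) (((u_inv_op N \<circ> v_inv_op N) ^^ k) vacuum)) = 0" if "0 < j" for j k
      by (rule vac_funpow_create_eq_0[OF supp_all_v_inv_op_last_annih[where N = N, OF P] _ X that])
        (auto simp: last_annih_def ends_annih_def)
  qed
  then show ?thesis
    using assms by (simp add: fock_moment_eq_vac u_pow_neg v_pow_neg eq_nat_nat_iff)
qed

lemma fock_moment_P_opposite_signs:
  assumes "0 \<le> p \<and> q < 0 \<or> p < 0 \<and> 0 \<le> q"
  shows "fock_moment N p q = 0"
proof -
  consider "0 \<le> p" "q < 0" | "p < 0" "0 < q" | "p < 0" "q = 0"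
    using assms by linarith
  then show ?thesis
  proof cases
    case 1
    have V: "supp_all (has_annih N below_diag) ((v_inv_op N ^^ nat (- q)) vacuum)"
      by (rule supp_all_funpow_create, rule supp_all_v_inv_op_annih[where C = True])
        (use 1 in \<open>simp_all add: P annih_P_monomials vacuum_def\<close>)
    have "supp_all (has_annih N below_diag) ((u_op N ^^ nat p) ((v_inv_op N ^^ nat (- q)) vacuum))"
      by (rule supp_all_funpow_keep[OF _ V], rule supp_all_u_op_annih[where C = False]) simp_all
    then show ?thesis
      using 1 by (simp add: fock_moment_eq_vac u_pow_nonneg v_pow_neg vac_eq_0_if_has_annih)
  next
    case 2
    have V: "supp_all (has_annih N above_diag) ((v_op N ^^ nat q) vacuum)"
      by (rule supp_all_funpow_create, rule supp_all_v_op_annih[where C = True])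
        (use 2 in \<open>simp_all add: P annih_P_monomials vacuum_def\<close>)
    have "supp_all (has_annih N above_diag) ((u_inv_op N ^^ nat (- p)) ((v_op N ^^ nat q) vacuum))"
      by (rule supp_all_funpow_keep[OF _ V], rule supp_all_u_inv_op_annih[where C = False]) simp_all
    then show ?thesis
      using 2 by (simp add: fock_moment_eq_vac u_pow_neg v_pow_nonneg vac_eq_0_if_has_annih)
  next
    case 3
    have "supp_all (has_annih N above_diag) ((u_inv_op N ^^ nat (- p)) vacuum)"
      by (rule supp_all_funpow_create, rule supp_all_u_inv_op_annih[where C = True])
        (use 3 in \<open>simp_all add: P annih_P_monomials vacuum_def\<close>)
    then show ?thesis
      using 3 by (simp add: fock_moment_eq_vac u_pow_neg v_pow_def vac_eq_0_if_has_annih)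
  qed
qed

lemma fock_moment_P:
  "fock_moment N p q = (if p = q then (if 0 \<le> p then tmom (N False) 1 1 ^ nat p
     else tmom (N False) (-1) (-1) ^ nat (- p)) else 0)"
  using fock_moment_P_nonneg fock_moment_P_neg fock_moment_P_opposite_signs
  by (cases "0 \<le> p"; cases "0 \<le> q") auto

end


section \<open>Probability measures on the torus\<close>

lemma torus2_eq: "torus2 = sphere 0 1 \<times> sphere 0 1"
  by (auto simp: torus2_def)

lemma compact_torus2: "compact torus2"
  by (simp add: torus2_eq compact_Times)

lemma torus2_sets[measurable]: "torus2 \<in> sets borel"
  by (simp add: compact_imp_closed compact_torus2)

lemma borel_measurable_power_int[measurable]:
  fixes f :: "'a \<Rightarrow> complex"
  assumes [measurable]: "f \<in> borel_measurable M"
  shows "(\<lambda>x. f x powi n) \<in> borel_measurable M"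
  unfolding power_int_def by simp

lemma fst_borel_measurable[measurable]: "(fst :: complex \<times> complex \<Rightarrow> complex) \<in> borel_measurable borel"
  unfolding borel_prod[symmetric] by measurable

lemma snd_borel_measurable[measurable]: "(snd :: complex \<times> complex \<Rightarrow> complex) \<in> borel_measurable borel"
  unfolding borel_prod[symmetric] by measurable

lemma cnj_borel_measurable[measurable]:
  fixes f :: "'a \<Rightarrow> complex"
  assumes [measurable]: "f \<in> borel_measurable M"
  shows "(\<lambda>x. cnj (f x)) \<in> borel_measurable M"
  using borel_measurable_continuous_onI[OF continuous_on_cnj[OF continuous_on_id]] measurable_compose
  by (metis assms)

lemma norm_power_int_sphere: "z \<in> sphere 0 1 \<Longrightarrow> cmod (z powi n) = 1"
  by (simp add: norm_power_int)

lemma inverse_eq_cnj_sphere: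
  assumes "z \<in> sphere 0 1"
  shows "inverse z = cnj z"
proof -
  have "z * cnj z = 1"
    using complex_norm_square[of z] assms by simp
  then show ?thesis
    by (rule inverse_unique)
qed

lemma measurable_borel_cong: "sets \<mu> = sets borel \<Longrightarrow> f \<in> measurable borel N \<Longrightarrow> f \<in> measurable \<mu> N"
  using measurable_cong_sets[of \<mu> borel N N] by simp

lemma PT2_prob_space: "PT2 \<nu> \<Longrightarrow> prob_space \<nu>"
  by (simp add: PT2_def)

lemma PT2_sets: "PT2 \<nu> \<Longrightarrow> sets \<nu> = sets borel"
  by (simp add: PT2_def)

lemma PT2_measurable: "PT2 \<nu> \<Longrightarrow> f \<in> borel_measurable borel \<Longrightarrow> f \<in> borel_measurable \<nu>"
  using PT2_sets measurable_cong_sets by blast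

lemma PT2_iff_AE:
  assumes "sets \<nu> = sets borel"
  shows "PT2 \<nu> \<longleftrightarrow> prob_space \<nu> \<and> (AE z in \<nu>. z \<in> torus2)"
proof -
  have "{z \<in> space \<nu>. z \<notin> torus2} = UNIV - torus2" "UNIV - torus2 \<in> sets \<nu>"
    using sets_eq_imp_space_eq[OF assms] assms by auto
  then show ?thesis
    using assms by (auto simp: PT2_def AE_iff_measurable[OF _ refl])
qed

lemma PT2_AE: "PT2 \<nu> \<Longrightarrow> AE z in \<nu>. z \<in> torus2"
  using PT2_iff_AE[OF PT2_sets] by blast

lemma integrable_monomial:
  assumes "PT2 \<nu>"
  shows "integrable \<nu> (\<lambda>z. fst z powi a * snd z powi b)"
proof -
  interpret prob_space \<nu>
    using PT2_prob_space[OF assms] .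
  show ?thesis
  proof (rule integrable_const_bound[where B = 1])
    show "AE x in \<nu>. norm (fst x powi a * snd x powi b) \<le> 1"
      using PT2_AE[OF assms] by eventually_elim (auto simp: torus2_eq norm_mult norm_power_int_sphere)
  qed (simp add: PT2_measurable[OF assms])
qed

lemma tmom_0_0: "PT2 \<nu> \<Longrightarrow> tmom \<nu> 0 0 = 1"
  by (simp add: tmom_def prob_space.prob_space PT2_prob_space)

lemma tmom_uminus:
  assumes "PT2 \<nu>"
  shows "tmom \<nu> (- a) (- b) = cnj (tmom \<nu> a b)"
proof -
  have "cnj (tmom \<nu> a b) = (\<integral>z. cnj (fst z powi a * snd z powi b) \<partial>\<nu>)"
    unfolding tmom_def by (simp only: Bochner_Integration.integral_cnj)
  also have "\<dots> = tmom \<nu> (- a) (- b)"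
    unfolding tmom_def
  proof (rule integral_cong_AE)
    show "AE x in \<nu>. cnj (fst x powi a * snd x powi b) = fst x powi - a * snd x powi - b"
      using PT2_AE[OF assms] by eventually_elim
        (auto simp: torus2_eq inverse_eq_cnj_sphere[symmetric] power_int_inverse power_int_minus)
  qed (auto intro!: PT2_measurable[OF assms] simp del: complex_cnj_mult complex_cnj_power_int)
  finally show ?thesis
    by simp
qed

lemma tstar_measurable[measurable]:
  "(\<lambda>z::complex \<times> complex. (fst z, inverse (snd z))) \<in> borel_measurable borel"
  unfolding borel_prod[symmetric] by measurable

lemma sets_tstar[simp]: "sets (tstar \<mu>) = sets borel"
  by (simp add: tstar_def)

lemma tmom_tstar:
  assumes "sets \<mu> = sets borel"
  shows "tmom (tstar \<mu>) a b = tmom \<mu> a (- b)"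
  unfolding tmom_def tstar_def
  by (subst integral_distr[OF measurable_borel_cong[OF assms tstar_measurable]])
    (simp_all add: power_int_inverse power_int_minus)

lemma tstar_tstar:
  assumes "sets \<mu> = sets borel"
  shows "tstar (tstar \<mu>) = \<mu>"
proof -
  have m: "(\<lambda>z::complex \<times> complex. (fst z, inverse (snd z))) \<in> measurable \<mu> borel"
    using measurable_borel_cong[OF assms tstar_measurable] .
  have "tstar (tstar \<mu>) = distr \<mu> borel ((\<lambda>z. (fst z, inverse (snd z))) \<circ> (\<lambda>z. (fst z, inverse (snd z))))"
    unfolding tstar_def by (rule distr_distr) (simp_all add: m)
  also have "\<dots> = distr \<mu> \<mu> (\<lambda>z. z)"
    by (rule distr_cong) (simp_all add: assms o_def)
  finally show ?thesis
    by (simp add: distr_id)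
qed

lemma PT2_tstar:
  assumes "PT2 \<mu>"
  shows "PT2 (tstar \<mu>)"
proof -
  have m: "(\<lambda>z::complex \<times> complex. (fst z, inverse (snd z))) \<in> measurable \<mu> borel"
    using measurable_borel_cong[OF PT2_sets[OF assms] tstar_measurable] .
  have "AE z in tstar \<mu>. z \<in> torus2"
    unfolding tstar_def using PT2_AE[OF assms]
    by (subst AE_distr_iff[OF m]) (auto simp: torus2_def norm_inverse elim!: eventually_mono)
  moreover have "prob_space (tstar \<mu>)"
    unfolding tstar_def using prob_space.prob_space_distr[OF PT2_prob_space[OF assms] m] .
  ultimately show ?thesis
    by (simp add: PT2_iff_AE)
qed


section \<open>Moments of the special measures\<close>

locale prob_on_circle =
  fixes M :: "complex measure"
  assumes prob_space: "prob_space M" and sets_M: "sets M = sets borel"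
    and AE_sphere: "AE z in M. z \<in> sphere 0 1"

lemma PT2_pair_measure:
  assumes "prob_on_circle M1" "prob_on_circle M2"
  shows "PT2 (M1 \<Otimes>\<^sub>M M2)"
proof -
  interpret A: prob_on_circle M1 by fact
  interpret B: prob_on_circle M2 by fact
  interpret P: pair_prob_space M1 M2
    by (simp add: pair_prob_space_def pair_sigma_finite_def prob_space_imp_sigma_finite A.prob_space B.prob_space)
  have sets: "sets (M1 \<Otimes>\<^sub>M M2) = sets borel"
    using sets_pair_measure_cong[OF A.sets_M B.sets_M] unfolding borel_prod .
  have "AE z in M1 \<Otimes>\<^sub>M M2. z \<in> torus2"
  proof (rule P.AE_pair_measure)
    show "{x \<in> space (M1 \<Otimes>\<^sub>M M2). x \<in> torus2} \<in> sets (M1 \<Otimes>\<^sub>M M2)"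
      using sets sets_eq_imp_space_eq[OF sets] by simp
    show "AE x in M1. AE y in M2. (x, y) \<in> torus2"
      using A.AE_sphere
    proof eventually_elim
      case (elim x)
      show ?case
        using B.AE_sphere by eventually_elim (use elim in \<open>simp add: torus2_eq\<close>)
    qed
  qed
  then show ?thesis
    using sets P.prob_space_axioms by (simp add: PT2_iff_AE)
qed

lemma tmom_pair_measure:
  assumes "prob_on_circle M1" "prob_on_circle M2"
  shows "tmom (M1 \<Otimes>\<^sub>M M2) a b = (\<integral>z. z powi a \<partial>M1) * (\<integral>z. z powi b \<partial>M2)"
proof -
  interpret A: prob_on_circle M1 by fact
  interpret B: prob_on_circle M2 by fact
  interpret P: pair_prob_space M1 M2
    by (simp add: pair_prob_space_def pair_sigma_finite_def prob_space_imp_sigma_finite A.prob_space B.prob_space)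
  have eq: "(\<lambda>z. fst z powi a * snd z powi b) = (\<lambda>(x, y). x powi a * y powi b)"
    by auto
  have "integrable (M1 \<Otimes>\<^sub>M M2) (\<lambda>(x, y). x powi a * y powi b)"
    using integrable_monomial[OF PT2_pair_measure[OF assms], of a b] unfolding eq .
  then show ?thesis
    unfolding tmom_def eq by (simp add: P.integral_fst'[symmetric])
qed

lemma integral_cis_int_multiple:
  fixes k :: int
  assumes "k \<noteq> 0"
  shows "integral\<^sup>L lborel (\<lambda>t. indicator {0..1::real} t *\<^sub>R cis (of_int k * (2 * pi * t))) = 0"
proof -
  define c where "c = 2 * pi * of_int k"
  have c0: "c \<noteq> 0"
    using assms by (simp add: c_def)
  define F where "F = (\<lambda>t::real. (- \<i> / complex_of_real c) * cis (c * t))"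
  have der: "(F has_vector_derivative cis (of_int k * (2 * pi * t))) (at t within {0..1})" for t
  proof -
    have "((\<lambda>t. cis (c * t)) has_derivative (\<lambda>h. (h * c) *\<^sub>R (\<i> * cis (c * t)))) (at t within {0..1})"
      by (rule has_derivative_cis) (auto intro!: derivative_eq_intros)
    then have "((\<lambda>t. cis (c * t)) has_vector_derivative (c *\<^sub>R (\<i> * cis (c * t)))) (at t within {0..1})"
      unfolding has_vector_derivative_def by (simp add: algebra_simps)
    then have "(F has_vector_derivative ((- \<i> / complex_of_real c) * (c *\<^sub>R (\<i> * cis (c * t))))) (at t within {0..1})"
      unfolding F_def by (rule has_vector_derivative_mult_right)
    moreover have "(- \<i> / complex_of_real c) * (c *\<^sub>R (\<i> * cis (c * t))) = cis (of_int k * (2 * pi * t))"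
      using c0 by (simp add: scaleR_conv_of_real field_simps c_def)
    ultimately show ?thesis
      by simp
  qed
  have "cis c = 1"
    unfolding c_def using cos_int_2pin[of k] sin_int_2pin[of k] by (simp add: complex_eq_iff)
  then have "F 1 = F 0"
    by (simp add: F_def)
  moreover have "integral\<^sup>L lborel (\<lambda>t. indicator {0..1::real} t *\<^sub>R cis (of_int k * (2 * pi * t))) = F 1 - F 0"
    by (rule integral_FTC_atLeastAtMost) (auto intro!: der continuous_intros)
  ultimately show ?thesis
    by simp
qed

lemma cis_measurable_unit_interval:
  "(\<lambda>t::real. cis (2 * pi * t)) \<in> measurable (restrict_space lborel {0..1}) borel"
proof -
  have "(\<lambda>t::real. cis (2 * pi * t)) \<in> borel_measurable borel"
    by (intro borel_measurable_continuous_onI continuous_intros)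
  then show ?thesis
    by (intro measurable_restrict_space1) simp
qed

lemma sets_haarT[simp]: "sets haarT = sets borel"
  by (simp add: haarT_def)

lemma prob_on_circle_haarT: "prob_on_circle haarT"
proof -
  have "prob_space (restrict_space lborel {0..1::real})"
    by (rule prob_spaceI) (simp add: emeasure_restrict_space space_restrict_space)
  then have "prob_space haarT"
    unfolding haarT_def by (rule prob_space.prob_space_distr[OF _ cis_measurable_unit_interval])
  moreover have "AE z in haarT. z \<in> sphere 0 1"
    unfolding haarT_def by (subst AE_distr_iff[OF cis_measurable_unit_interval]) auto
  ultimately show ?thesis
    by (simp add: prob_on_circle_def)
qed

lemma integral_power_int_haarT: "(\<integral>z. z powi k \<partial>haarT) = (if k = 0 then 1 else 0)"
proof (cases "k = 0")
  case True
  then show ?thesis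
    using prob_space.prob_space[OF prob_on_circle.prob_space[OF prob_on_circle_haarT]] by simp
next
  case False
  have "(\<integral>z. z powi k \<partial>haarT) = (\<integral>t. cis (2 * pi * t) powi k \<partial>restrict_space lborel {0..1})"
    unfolding haarT_def by (rule integral_distr[OF cis_measurable_unit_interval]) simp
  also have "\<dots> = integral\<^sup>L lborel (\<lambda>t. indicator {0..1::real} t *\<^sub>R cis (of_int k * (2 * pi * t)))"
    by (subst integral_restrict_space) (simp_all add: cis_power_int)
  also have "\<dots> = 0"
    by (rule integral_cis_int_multiple[OF False])
  finally show ?thesis
    using False by simp
qed

lemma prob_on_circle_delta1: "prob_on_circle delta1"
  unfolding prob_on_circle_def delta1_def by (auto simp: prob_space_return AE_return)

lemma integral_power_int_delta1: "(\<integral>z. z powi k \<partial>delta1) = 1"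
  unfolding delta1_def by (subst integral_return) auto

lemma prob_on_circle_distr:
  assumes "PT2 \<nu>" "f \<in> borel_measurable borel" "\<And>z. z \<in> torus2 \<Longrightarrow> f z \<in> sphere 0 1"
  shows "prob_on_circle (distr \<nu> borel f)"
proof -
  have m: "f \<in> borel_measurable \<nu>"
    by (rule PT2_measurable[OF assms(1,2)])
  have "AE z in distr \<nu> borel f. z \<in> sphere 0 1"
    by (subst AE_distr_iff[OF m]) (use PT2_AE[OF assms(1)] assms(3) in \<open>auto elim: eventually_mono\<close>)
  then show ?thesis
    using prob_space.prob_space_distr[OF PT2_prob_space[OF assms(1)] m] by (simp add: prob_on_circle_def)
qed

lemma prob_on_circle_marg1: "PT2 \<nu> \<Longrightarrow> prob_on_circle (marg1 \<nu>)"
  unfolding marg1_def by (rule prob_on_circle_distr) (auto simp: torus2_eq)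

lemma prob_on_circle_marg2: "PT2 \<nu> \<Longrightarrow> prob_on_circle (marg2 \<nu>)"
  unfolding marg2_def by (rule prob_on_circle_distr) (auto simp: torus2_eq)

lemma integral_power_int_marg1: "PT2 \<nu> \<Longrightarrow> (\<integral>z. z powi k \<partial>marg1 \<nu>) = tmom \<nu> k 0"
  unfolding marg1_def tmom_def by (subst integral_distr[OF measurable_borel_cong[OF PT2_sets]]) auto

lemma integral_power_int_marg2: "PT2 \<nu> \<Longrightarrow> (\<integral>z. z powi k \<partial>marg2 \<nu>) = tmom \<nu> 0 k"
  unfolding marg2_def tmom_def by (subst integral_distr[OF measurable_borel_cong[OF PT2_sets]]) auto

lemma sets_Pmeas[simp]: "sets Pmeas = sets borel"
  by (simp add: Pmeas_def)

lemma tmom_Pmeas: "tmom Pmeas a b = (if a = b then 1 else 0)"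
proof -
  have m: "(\<lambda>s::complex. (s, cnj s)) \<in> measurable haarT borel"
    by (rule measurable_borel_cong[OF sets_haarT]) (simp add: borel_prod[symmetric])
  have "tmom Pmeas a b = (\<integral>s. s powi a * cnj s powi b \<partial>haarT)"
    unfolding tmom_def Pmeas_def by (subst integral_distr[OF m]) (simp_all del: complex_cnj_power_int)
  also have "\<dots> = (\<integral>s. s powi (a - b) \<partial>haarT)"
  proof (rule integral_cong_AE)
    show "AE x in haarT. x powi a * cnj x powi b = x powi (a - b)"
      using prob_on_circle.AE_sphere[OF prob_on_circle_haarT]
    proof eventually_elim
      case (elim x)
      then have "x \<noteq> 0"
        by auto
      then show ?case
        by (simp add: power_int_diff power_int_inverse divide_inverse
            flip: inverse_eq_cnj_sphere[OF elim] del: complex_cnj_power_int)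
    qed
  qed (auto intro!: measurable_borel_cong[OF sets_haarT] simp del: complex_cnj_power_int)
  finally show ?thesis
    by (simp add: integral_power_int_haarT)
qed


section \<open>Measures on the torus are determined by their moments\<close>

definition lpoly_eval :: "lpoly \<Rightarrow> complex \<times> complex \<Rightarrow> complex" where
  "lpoly_eval L z = (\<Sum>t\<leftarrow>L. snd t * (fst z powi fst (fst t) * snd z powi snd (fst t)))"

lemma lpoly_eval_simps[simp]:
  "lpoly_eval [] z = 0"
  "lpoly_eval (t # L) z = snd t * (fst z powi fst (fst t) * snd z powi snd (fst t)) + lpoly_eval L z"
  "lpoly_eval (L1 @ L2) z = lpoly_eval L1 z + lpoly_eval L2 z"
  by (simp_all add: lpoly_eval_def)

lemma lpoly_eval_fun:
  "lpoly_eval [] = (\<lambda>z. 0)"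
  "lpoly_eval (t # L) = (\<lambda>z. snd t * (fst z powi fst (fst t) * snd z powi snd (fst t)) + lpoly_eval L z)"
  by (simp_all add: fun_eq_iff)

lemma lpoly_eval_measurable[measurable]: "lpoly_eval L \<in> borel_measurable borel"
  by (induction L) (simp_all add: lpoly_eval_fun)

lemma integrable_lpoly_eval: "PT2 \<mu> \<Longrightarrow> integrable \<mu> (lpoly_eval L)"
  by (induction L) (simp_all add: lpoly_eval_fun integrable_monomial)

lemma integral_lpoly_eval: "PT2 \<mu> \<Longrightarrow> (\<integral>z. lpoly_eval L z \<partial>\<mu>) = lexp \<mu> L"
  by (induction L) (simp_all add: lpoly_eval_fun integrable_monomial integrable_lpoly_eval
      lexp_def tmom_def)

definition lpoly_mult :: "lpoly \<Rightarrow> lpoly \<Rightarrow> lpoly" where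
  "lpoly_mult L1 L2 = concat (map (\<lambda>t1. map (\<lambda>t2.
     ((fst (fst t1) + fst (fst t2), snd (fst t1) + snd (fst t2)), snd t1 * snd t2)) L2) L1)"

lemma lpoly_eval_mult:
  assumes "fst z \<noteq> 0" "snd z \<noteq> 0"
  shows "lpoly_eval (lpoly_mult L1 L2) z = lpoly_eval L1 z * lpoly_eval L2 z"
proof (induction L1)
  case (Cons t1 L1)
  have "lpoly_eval (map (\<lambda>t2. ((fst (fst t1) + fst (fst t2), snd (fst t1) + snd (fst t2)), snd t1 * snd t2)) L2) z =
        snd t1 * (fst z powi fst (fst t1) * snd z powi snd (fst t1)) * lpoly_eval L2 z"
    by (induction L2) (auto simp: power_int_add assms algebra_simps)
  then show ?case
    using Cons by (simp add: lpoly_mult_def algebra_simps)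
qed (simp add: lpoly_mult_def)

definition trig_on_torus :: "(complex \<times> complex \<Rightarrow> real) \<Rightarrow> bool" where
  "trig_on_torus g \<longleftrightarrow> (\<exists>L. \<forall>z\<in>torus2. complex_of_real (g z) = lpoly_eval L z)"

text \<open>On the circle \<open>Re w = (w + w\<^sup>-\<^sup>1)/2\<close> and \<open>Im w = (w - w\<^sup>-\<^sup>1)/(2i)\<close>.\<close>

lemma re_im_sphere:
  fixes a b :: real
  assumes "w \<in> sphere 0 1"
  shows "(complex_of_real a - \<i> * complex_of_real b) / 2 * w powi 1 +
      (complex_of_real a + \<i> * complex_of_real b) / 2 * w powi (-1) = complex_of_real (Re w * a + Im w * b)"
proof -
  have e: "w powi (-1) = cnj w"
    using inverse_eq_cnj_sphere[OF assms] by (simp add: power_int_minus)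
  show ?thesis
    unfolding e by (simp add: complex_eq_iff field_simps)
qed

lemma trig_on_torus_linear:
  assumes "bounded_linear f"
  shows "trig_on_torus f"
proof -
  interpret bounded_linear f by fact
  define \<alpha> where "\<alpha> = f (1, 0)"
  define \<beta> where "\<beta> = f (\<i>, 0)"
  define \<gamma> where "\<gamma> = f (0, 1)"
  define \<delta> where "\<delta> = f (0, \<i>)"
  have fz: "f z = Re (fst z) * \<alpha> + Im (fst z) * \<beta> + (Re (snd z) * \<gamma> + Im (snd z) * \<delta>)" for z
  proof -
    have "z = (Re (fst z) *\<^sub>R (1, 0) + Im (fst z) *\<^sub>R (\<i>, 0)) + (Re (snd z) *\<^sub>R (0, 1) + Im (snd z) *\<^sub>R (0, \<i>))"
      by (cases z) (simp add: complex_eq_iff)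
    then have "f z = f (Re (fst z) *\<^sub>R (1, 0) + Im (fst z) *\<^sub>R (\<i>, 0) + (Re (snd z) *\<^sub>R (0, 1) + Im (snd z) *\<^sub>R (0, \<i>)))"
      by simp
    also have "\<dots> = Re (fst z) *\<^sub>R f (1, 0) + Im (fst z) *\<^sub>R f (\<i>, 0) + (Re (snd z) *\<^sub>R f (0, 1) + Im (snd z) *\<^sub>R f (0, \<i>))"
      by (simp only: add scale)
    finally show ?thesis
      by (simp add: \<alpha>_def \<beta>_def \<gamma>_def \<delta>_def)
  qed
  define L where "L = [((1::int, 0::int), (complex_of_real \<alpha> - \<i> * complex_of_real \<beta>) / 2),
                       ((-1, 0), (complex_of_real \<alpha> + \<i> * complex_of_real \<beta>) / 2),
                       ((0, 1), (complex_of_real \<gamma> - \<i> * complex_of_real \<delta>) / 2),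
                       ((0, -1), (complex_of_real \<gamma> + \<i> * complex_of_real \<delta>) / 2)]"
  have "complex_of_real (f z) = lpoly_eval L z" if "z \<in> torus2" for z
  proof -
    have c: "fst z \<in> sphere 0 1" "snd z \<in> sphere 0 1"
      using that by (auto simp: torus2_eq)
    have "lpoly_eval L z = ((complex_of_real \<alpha> - \<i> * complex_of_real \<beta>) / 2 * fst z powi 1 +
          (complex_of_real \<alpha> + \<i> * complex_of_real \<beta>) / 2 * fst z powi (-1)) +
        ((complex_of_real \<gamma> - \<i> * complex_of_real \<delta>) / 2 * snd z powi 1 +
          (complex_of_real \<gamma> + \<i> * complex_of_real \<delta>) / 2 * snd z powi (-1))"
      by (simp add: L_def del: power_int_1_right)
    then show ?thesis
      using re_im_sphere[OF c(1)] re_im_sphere[OF c(2)] fz[of z] by simp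
  qed
  then show ?thesis
    unfolding trig_on_torus_def by blast
qed

lemma trig_on_torus_polynomial: "real_polynomial_function g \<Longrightarrow> trig_on_torus g"
proof (induction rule: real_polynomial_function.induct)
  case (const c)
  have "complex_of_real c = lpoly_eval [((0, 0), complex_of_real c)] z" for z
    by simp
  then show ?case
    unfolding trig_on_torus_def by blast
next
  case (add f g)
  then obtain L1 L2 where "\<forall>z\<in>torus2. complex_of_real (f z) = lpoly_eval L1 z"
    "\<forall>z\<in>torus2. complex_of_real (g z) = lpoly_eval L2 z"
    unfolding trig_on_torus_def by blast
  then have "\<forall>z\<in>torus2. complex_of_real (f z + g z) = lpoly_eval (L1 @ L2) z"
    by simp
  then show ?case
    unfolding trig_on_torus_def by blast
next
  case (mult f g)
  then obtain L1 L2 where "\<forall>z\<in>torus2. complex_of_real (f z) = lpoly_eval L1 z"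
    "\<forall>z\<in>torus2. complex_of_real (g z) = lpoly_eval L2 z"
    unfolding trig_on_torus_def by blast
  moreover have "fst z \<noteq> 0" "snd z \<noteq> 0" if "z \<in> torus2" for z
    using that by (auto simp: torus2_def)
  ultimately have "\<forall>z\<in>torus2. complex_of_real (f z * g z) = lpoly_eval (lpoly_mult L1 L2) z"
    by (simp add: lpoly_eval_mult)
  then show ?case
    unfolding trig_on_torus_def by blast
qed (rule trig_on_torus_linear)

lemma integrable_continuous_torus:
  fixes f :: "complex \<times> complex \<Rightarrow> real"
  assumes "PT2 \<mu>" "continuous_on UNIV f"
  shows "integrable \<mu> f"
proof -
  interpret prob_space \<mu>
    by (rule PT2_prob_space[OF assms(1)])
  have "compact (f ` torus2)"
    using assms(2) compact_torus2 by (auto intro: compact_continuous_image continuous_on_subset)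
  then obtain B where "\<forall>x\<in>f ` torus2. norm x \<le> B"
    using compact_imp_bounded bounded_iff by metis
  then have B: "\<And>z. z \<in> torus2 \<Longrightarrow> \<bar>f z\<bar> \<le> B"
    by auto
  show ?thesis
  proof (rule integrable_const_bound[where B = B])
    show "AE x in \<mu>. norm (f x) \<le> B"
      using PT2_AE[OF assms(1)] by eventually_elim (simp add: B)
  qed (rule PT2_measurable[OF assms(1) borel_measurable_continuous_onI[OF assms(2)]])
qed

lemma integral_polynomial_eq_if_tmom_eq:
  fixes g :: "complex \<times> complex \<Rightarrow> real"
  assumes "PT2 \<mu>" "PT2 \<nu>" "tmom \<mu> = tmom \<nu>" "real_polynomial_function g"
  shows "integral\<^sup>L \<mu> g = integral\<^sup>L \<nu> g"
proof -
  obtain L where L: "\<forall>z\<in>torus2. complex_of_real (g z) = lpoly_eval L z"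
    using trig_on_torus_polynomial[OF assms(4)] unfolding trig_on_torus_def by blast
  have [measurable]: "g \<in> borel_measurable borel"
    using assms(4) real_polynomial_function_eq
    by (auto intro!: borel_measurable_continuous_onI continuous_on_polymonial_function)
  have I: "complex_of_real (integral\<^sup>L \<rho> g) = lexp \<rho> L" if "PT2 \<rho>" for \<rho>
  proof -
    have "complex_of_real (integral\<^sup>L \<rho> g) = (\<integral>z. lpoly_eval L z \<partial>\<rho>)"
      unfolding integral_complex_of_real[symmetric]
      by (rule integral_cong_AE) (use PT2_AE[OF that] L in \<open>auto intro!: PT2_measurable[OF that] elim: eventually_mono\<close>)
    then show ?thesis
      by (simp add: integral_lpoly_eval[OF that])
  qed
  have "lexp \<mu> L = lexp \<nu> L"
    using assms(3) by (simp add: lexp_def)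
  then show ?thesis
    using I[OF assms(1)] I[OF assms(2)] by (metis of_real_eq_iff)
qed

lemma integral_continuous_eq_if_tmom_eq:
  fixes f :: "complex \<times> complex \<Rightarrow> real"
  assumes "PT2 \<mu>" "PT2 \<nu>" "tmom \<mu> = tmom \<nu>" "continuous_on UNIV f"
  shows "integral\<^sup>L \<mu> f = integral\<^sup>L \<nu> f"
proof -
  have "\<bar>integral\<^sup>L \<mu> f - integral\<^sup>L \<nu> f\<bar> \<le> 2 * e" if e: "e > 0" for e
  proof -
    obtain g where g: "real_polynomial_function g" "\<And>x. x \<in> torus2 \<Longrightarrow> \<bar>f x - g x\<bar> < e"
      using Stone_Weierstrass_real_polynomial_function[OF compact_torus2 continuous_on_subset[OF assms(4)] e]
      by blast
    have gc: "continuous_on UNIV g"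
      using g(1) real_polynomial_function_eq by (auto intro: continuous_on_polymonial_function)
    have close: "\<bar>integral\<^sup>L \<rho> f - integral\<^sup>L \<rho> g\<bar> \<le> e" if "PT2 \<rho>" for \<rho>
    proof -
      interpret prob_space \<rho>
        by (rule PT2_prob_space[OF that])
      have int: "integrable \<rho> f" "integrable \<rho> g"
        using integrable_continuous_torus[OF that] assms(4) gc by auto
      have "\<bar>integral\<^sup>L \<rho> (\<lambda>z. f z - g z)\<bar> \<le> integral\<^sup>L \<rho> (\<lambda>z. \<bar>f z - g z\<bar>)"
        by (rule integral_abs_bound)
      also have "\<dots> \<le> integral\<^sup>L \<rho> (\<lambda>z. e)"
        using int PT2_AE[OF that] g(2)
        by (intro integral_mono_AE) (auto elim!: eventually_mono intro: less_imp_le)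
      finally show ?thesis
        using int by (simp add: prob_space)
    qed
    show ?thesis
      using close[OF assms(1)] close[OF assms(2)] integral_polynomial_eq_if_tmom_eq[OF assms(1-3) g(1)]
      by linarith
  qed
  then have "\<bar>integral\<^sup>L \<mu> f - integral\<^sup>L \<nu> f\<bar> \<le> 0 + e" if "e > 0" for e
    using that by (metis add_0 half_gt_zero field_sum_of_halves mult_2)
  then have "\<bar>integral\<^sup>L \<mu> f - integral\<^sup>L \<nu> f\<bar> \<le> 0"
    by (rule field_le_epsilon)
  then show ?thesis
    by simp
qed

lemma tendsto_indicator_closed_infdist:
  assumes "closed C" "C \<noteq> {}"
  shows "(\<lambda>n. max 0 (1 - real n * infdist x C)) \<longlonglongrightarrow> indicator C x"
proof (cases "x \<in> C")
  case True
  then show ?thesis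
    using in_closed_iff_infdist_zero[OF assms] by simp
next
  case False
  then have d: "infdist x C > 0"
    using in_closed_iff_infdist_zero[OF assms] infdist_nonneg[of x C] by simp
  obtain N where N: "1 / infdist x C < real N"
    using reals_Archimedean2 by blast
  have "max 0 (1 - real n * infdist x C) = 0" if "N \<le> n" for n
  proof -
    have "1 < real N * infdist x C"
      using N d by (simp add: field_simps)
    also have "\<dots> \<le> real n * infdist x C"
      using that d by (simp add: mult_right_mono)
    finally show ?thesis
      by simp
  qed
  then have "(\<lambda>n. max 0 (1 - real n * infdist x C)) \<longlonglongrightarrow> 0"
    by (intro tendsto_eventually) (auto simp: eventually_sequentially)
  then show ?thesis
    using False by simp
qed

lemma measure_closed_eq_if_tmom_eq:
  assumes "PT2 \<mu>" "PT2 \<nu>" "tmom \<mu> = tmom \<nu>" "closed C"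
  shows "measure \<mu> C = measure \<nu> C"
proof (cases "C = {}")
  case False
  define f where "f = (\<lambda>(n::nat) x. max 0 (1 - real n * infdist x C))"
  have fc: "continuous_on UNIV (f n)" for n
    unfolding f_def by (intro continuous_intros)
  have L: "(\<lambda>n. integral\<^sup>L \<rho> (f n)) \<longlonglongrightarrow> measure \<rho> C" if "PT2 \<rho>" for \<rho>
  proof -
    interpret prob_space \<rho>
      by (rule PT2_prob_space[OF that])
    have Cs: "C \<in> sets \<rho>"
      using PT2_sets[OF that] assms(4) by simp
    have "(\<lambda>n. integral\<^sup>L \<rho> (f n)) \<longlonglongrightarrow> integral\<^sup>L \<rho> (indicator C)"
    proof (rule integral_dominated_convergence[where w = "\<lambda>_. 1"])
      show "f n \<in> borel_measurable \<rho>" for n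
        by (rule PT2_measurable[OF that borel_measurable_continuous_onI[OF fc]])
      show "AE x in \<rho>. norm (f n x) \<le> 1" for n
        by (simp add: f_def infdist_nonneg)
    qed (use Cs tendsto_indicator_closed_infdist[OF assms(4) False] in \<open>simp_all add: f_def\<close>)
    then show ?thesis
      using Cs by simp
  qed
  have "integral\<^sup>L \<mu> (f n) = integral\<^sup>L \<nu> (f n)" for n
    by (rule integral_continuous_eq_if_tmom_eq[OF assms(1-3) fc])
  then show ?thesis
    using LIMSEQ_unique[OF L[OF assms(1)]] L[OF assms(2)] by simp
qed simp

lemma PT2_eqI_tmom:
  assumes "PT2 \<mu>" "PT2 \<nu>" "tmom \<mu> = tmom \<nu>"
  shows "\<mu> = \<nu>"
proof -
  interpret M: prob_space \<mu>
    by (rule PT2_prob_space[OF assms(1)])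
  interpret N: prob_space \<nu>
    by (rule PT2_prob_space[OF assms(2)])
  have sb: "sets (borel :: (complex \<times> complex) measure) = sigma_sets UNIV (Collect closed)"
    unfolding borel_eq_closed by (rule sets_measure_of) simp
  show ?thesis
  proof (rule measure_eqI_generator_eq[where E = "Collect closed" and \<Omega> = UNIV and A = "\<lambda>_. UNIV"])
    fix X :: "(complex \<times> complex) set"
    assume "X \<in> Collect closed"
    then have "measure \<mu> X = measure \<nu> X"
      by (intro measure_closed_eq_if_tmom_eq[OF assms]) simp
    then show "emeasure \<mu> X = emeasure \<nu> X"
      by (simp add: M.emeasure_eq_measure N.emeasure_eq_measure)
  qed (auto simp: Int_stable_def PT2_sets[OF assms(1)] PT2_sets[OF assms(2)] sb M.emeasure_eq_measure)
qed


section \<open>Factors of a measure on the torus\<close>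

lemma bbconv_iff: "bbconv \<mu> \<mu>'' \<nu> \<longleftrightarrow> PT2 \<nu> \<and> tmom \<nu> = fock_moment (\<lambda>i. if i then \<mu> else \<mu>'')"
  unfolding bbconv_def fun_eq_iff ..

text \<open>If \<open>\<mu> \<boxtimes>\<boxtimes> \<mu>''\<close> has the moments \<open>\<Phi> (tmom \<mu>'')\<close> for an idempotent \<open>\<Phi>\<close>, then the
  measures with factor \<open>\<mu>\<close> are exactly those whose moments are fixed by \<open>\<Phi>\<close>; one may take
  \<open>\<mu>'' = \<nu>\<close>.\<close>

lemma bb_factor_iff_fixed_point:
  assumes "PT2 \<nu>"
    and conv: "\<And>\<mu>''. PT2 \<mu>'' \<Longrightarrow> fock_moment (\<lambda>i. if i then \<mu> else \<mu>'') = \<Phi> (tmom \<mu>'')"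
    and idem: "\<And>m. \<Phi> (\<Phi> m) = \<Phi> m"
  shows "bb_factor \<mu> \<nu> \<longleftrightarrow> tmom \<nu> = \<Phi> (tmom \<nu>)"
proof
  assume "bb_factor \<mu> \<nu>"
  then obtain \<mu>'' where "PT2 \<mu>''" "tmom \<nu> = fock_moment (\<lambda>i. if i then \<mu> else \<mu>'')"
    unfolding bb_factor_def bbconv_iff by blast
  then have "tmom \<nu> = \<Phi> (tmom \<mu>'')"
    using conv by simp
  then show "tmom \<nu> = \<Phi> (tmom \<nu>)"
    by (simp add: idem)
next
  assume "tmom \<nu> = \<Phi> (tmom \<nu>)"
  then have "bbconv \<mu> \<nu> \<nu>"
    unfolding bbconv_iff using assms(1) conv[OF assms(1)] by simp
  then show "bb_factor \<mu> \<nu>"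
    unfolding bb_factor_def using assms(1) by blast
qed

lemma bbop_factor_iff_bb_factor_tstar:
  assumes "PT2 \<nu>"
  shows "bbop_factor \<mu> \<nu> \<longleftrightarrow> bb_factor (tstar \<mu>) (tstar \<nu>)"
proof
  assume "bbop_factor \<mu> \<nu>"
  then obtain \<mu>'' \<sigma> where \<mu>'': "PT2 \<mu>''" and \<sigma>: "bbconv (tstar \<mu>) (tstar \<mu>'') \<sigma>" "\<nu> = tstar \<sigma>"
    unfolding bbop_factor_def bbconv_op_def by blast
  then have "tstar \<nu> = \<sigma>"
    using tstar_tstar[OF PT2_sets] by (simp add: bbconv_def)
  then show "bb_factor (tstar \<mu>) (tstar \<nu>)"
    unfolding bb_factor_def using PT2_tstar[OF \<mu>''] \<sigma>(1) by blast
next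
  assume "bb_factor (tstar \<mu>) (tstar \<nu>)"
  then obtain \<mu>'' where \<mu>'': "PT2 \<mu>''" and conv: "bbconv (tstar \<mu>) \<mu>'' (tstar \<nu>)"
    unfolding bb_factor_def by blast
  have "tstar (tstar \<mu>'') = \<mu>''" "tstar (tstar \<nu>) = \<nu>"
    using tstar_tstar[OF PT2_sets] \<mu>'' assms by blast+
  then have "bbconv_op \<mu> (tstar \<mu>'') \<nu>"
    unfolding bbconv_op_def using assms conv by metis
  then show "bbop_factor \<mu> \<nu>"
    unfolding bbop_factor_def using PT2_tstar[OF \<mu>''] by blast
qed

lemma tmom_tstar_eq_iff:
  assumes "sets \<nu> = sets borel" "\<And>m. \<Phi> (\<lambda>p q. m p (- q)) = (\<lambda>p q. \<Phi> m p (- q))"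
  shows "tmom (tstar \<nu>) = \<Phi> (tmom (tstar \<nu>)) \<longleftrightarrow> tmom \<nu> = \<Phi> (tmom \<nu>)"
proof -
  have "tmom (tstar \<nu>) = (\<lambda>p q. tmom \<nu> p (- q))"
    by (intro ext) (simp add: tmom_tstar[OF assms(1)])
  moreover have "(\<lambda>p q. f p (- q)) = (\<lambda>p q. g p (- q)) \<longleftrightarrow> f = g" for f g :: "int \<Rightarrow> int \<Rightarrow> complex"
  proof
    assume "(\<lambda>p q. f p (- q)) = (\<lambda>p q. g p (- q))"
    then have "f p (- (- q)) = g p (- (- q))" for p q
      by (drule_tac fun_cong[of _ _ p], drule_tac fun_cong[of _ _ "- q"]) simp
    then show "f = g"
      by (simp add: fun_eq_iff)
  qed simp
  ultimately show ?thesis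
    by (simp add: assms(2))
qed

lemma bbop_factor_iff_fixed_point:
  assumes "PT2 \<nu>"
    and conv: "\<And>\<mu>''. PT2 \<mu>'' \<Longrightarrow> fock_moment (\<lambda>i. if i then tstar \<mu> else \<mu>'') = \<Phi> (tmom \<mu>'')"
    and idem: "\<And>m. \<Phi> (\<Phi> m) = \<Phi> m"
    and flip: "\<And>m. \<Phi> (\<lambda>p q. m p (- q)) = (\<lambda>p q. \<Phi> m p (- q))"
  shows "bbop_factor \<mu> \<nu> \<longleftrightarrow> tmom \<nu> = \<Phi> (tmom \<nu>)"
proof -
  have "bbop_factor \<mu> \<nu> \<longleftrightarrow> bb_factor (tstar \<mu>) (tstar \<nu>)"
    by (rule bbop_factor_iff_bb_factor_tstar[OF assms(1)])
  also have "\<dots> \<longleftrightarrow> tmom (tstar \<nu>) = \<Phi> (tmom (tstar \<nu>))"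
    by (rule bb_factor_iff_fixed_point[OF PT2_tstar[OF assms(1)] conv idem])
  also have "\<dots> \<longleftrightarrow> tmom \<nu> = \<Phi> (tmom \<nu>)"
    by (rule tmom_tstar_eq_iff[OF PT2_sets[OF assms(1)] flip])
  finally show ?thesis .
qed

definition mom_haar_fst :: "(int \<Rightarrow> int \<Rightarrow> complex) \<Rightarrow> int \<Rightarrow> int \<Rightarrow> complex" where
  "mom_haar_fst m p q = (if p = 0 then m 0 q else 0)"

definition mom_haar_snd :: "(int \<Rightarrow> int \<Rightarrow> complex) \<Rightarrow> int \<Rightarrow> int \<Rightarrow> complex" where
  "mom_haar_snd m p q = (if q = 0 then m p 0 else 0)"

definition mom_haar_haar :: "int \<Rightarrow> int \<Rightarrow> complex" where
  "mom_haar_haar p q = (if p = 0 \<and> q = 0 then 1 else 0)"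

definition mom_diag :: "(int \<Rightarrow> int \<Rightarrow> complex) \<Rightarrow> int \<Rightarrow> int \<Rightarrow> complex" where
  "mom_diag m p q = (if p = q then (if 0 \<le> p then m 1 1 ^ nat p else m (-1) (-1) ^ nat (- p)) else 0)"

lemma PT2_products:
  "PT2 (haarT \<Otimes>\<^sub>M delta1)" "PT2 (delta1 \<Otimes>\<^sub>M haarT)" "PT2 (haarT \<Otimes>\<^sub>M haarT)"
  by (intro PT2_pair_measure prob_on_circle_haarT prob_on_circle_delta1)+

lemma tmom_products:
  "tmom (haarT \<Otimes>\<^sub>M delta1) = mom_haar_fst (\<lambda>_ _. 1)"
  "tmom (delta1 \<Otimes>\<^sub>M haarT) = mom_haar_snd (\<lambda>_ _. 1)"
  "tmom (haarT \<Otimes>\<^sub>M haarT) = mom_haar_haar"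
  by (simp_all add: fun_eq_iff tmom_pair_measure prob_on_circle_haarT prob_on_circle_delta1
      integral_power_int_haarT integral_power_int_delta1 mom_haar_fst_def mom_haar_snd_def mom_haar_haar_def)

lemma tmom_haar_marg2: "PT2 \<nu> \<Longrightarrow> tmom (haarT \<Otimes>\<^sub>M marg2 \<nu>) = mom_haar_fst (tmom \<nu>)"
  by (simp add: fun_eq_iff tmom_pair_measure prob_on_circle_haarT prob_on_circle_marg2
      integral_power_int_haarT integral_power_int_marg2 mom_haar_fst_def)

lemma tmom_marg1_haar: "PT2 \<nu> \<Longrightarrow> tmom (marg1 \<nu> \<Otimes>\<^sub>M haarT) = mom_haar_snd (tmom \<nu>)"
  by (simp add: fun_eq_iff tmom_pair_measure prob_on_circle_haarT prob_on_circle_marg1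
      integral_power_int_haarT integral_power_int_marg1 mom_haar_snd_def)

lemma tmom_tstar_products:
  "tmom (tstar (haarT \<Otimes>\<^sub>M delta1)) = mom_haar_fst (\<lambda>_ _. 1)"
  "tmom (tstar (delta1 \<Otimes>\<^sub>M haarT)) = mom_haar_snd (\<lambda>_ _. 1)"
  "tmom (tstar (haarT \<Otimes>\<^sub>M haarT)) = mom_haar_haar"
  using PT2_sets[OF PT2_products(1)] PT2_sets[OF PT2_products(2)] PT2_sets[OF PT2_products(3)]
  by (simp_all add: fun_eq_iff tmom_tstar tmom_products mom_haar_fst_def mom_haar_snd_def mom_haar_haar_def)

lemma fock_moment_factor_haar_fst:
  assumes "tmom \<mu> = mom_haar_fst (\<lambda>_ _. 1)" "PT2 \<mu>''"
  shows "fock_moment (\<lambda>i. if i then \<mu> else \<mu>'') = mom_haar_fst (tmom \<mu>'')"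
  using fock_moment_haar_fst[of "\<lambda>i. if i then \<mu> else \<mu>''"] assms
  by (simp add: fun_eq_iff mom_haar_fst_def tmom_0_0)

lemma fock_moment_factor_haar_snd:
  assumes "tmom \<mu> = mom_haar_snd (\<lambda>_ _. 1)" "PT2 \<mu>''"
  shows "fock_moment (\<lambda>i. if i then \<mu> else \<mu>'') = mom_haar_snd (tmom \<mu>'')"
  using fock_moment_haar_snd[of "\<lambda>i. if i then \<mu> else \<mu>''"] assms
  by (simp add: fun_eq_iff mom_haar_snd_def tmom_0_0)

lemma fock_moment_factor_haar_haar:
  assumes "tmom \<mu> = mom_haar_haar"
  shows "fock_moment (\<lambda>i. if i then \<mu> else \<mu>'') = mom_haar_haar"
  using fock_moment_haar_haar[of "\<lambda>i. if i then \<mu> else \<mu>''"] assms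
  by (simp add: fun_eq_iff mom_haar_haar_def)

lemma fock_moment_factor_Pmeas:
  "fock_moment (\<lambda>i. if i then Pmeas else \<mu>'') = mom_diag (tmom \<mu>'')"
  using fock_moment_P[of "\<lambda>i. if i then Pmeas else \<mu>''"]
  by (simp add: fun_eq_iff mom_diag_def tmom_Pmeas)

lemma eq_iff_tmom_fixed:
  assumes "PT2 \<nu>" "PT2 \<mu>" "tmom \<mu> = \<Phi> (tmom \<nu>)"
  shows "\<nu> = \<mu> \<longleftrightarrow> tmom \<nu> = \<Phi> (tmom \<nu>)"
proof
  assume "\<nu> = \<mu>"
  then show "tmom \<nu> = \<Phi> (tmom \<nu>)"
    using assms(3) by simp
next
  assume "tmom \<nu> = \<Phi> (tmom \<nu>)"
  then show "\<nu> = \<mu>"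
    using PT2_eqI_tmom[OF assms(1,2)] assms(3) by simp
qed

lemma eq_haar_marg2_iff: "PT2 \<nu> \<Longrightarrow> \<nu> = haarT \<Otimes>\<^sub>M marg2 \<nu> \<longleftrightarrow> tmom \<nu> = mom_haar_fst (tmom \<nu>)"
  by (intro eq_iff_tmom_fixed PT2_pair_measure prob_on_circle_haarT prob_on_circle_marg2 tmom_haar_marg2)

lemma eq_marg1_haar_iff: "PT2 \<nu> \<Longrightarrow> \<nu> = marg1 \<nu> \<Otimes>\<^sub>M haarT \<longleftrightarrow> tmom \<nu> = mom_haar_snd (tmom \<nu>)"
  by (intro eq_iff_tmom_fixed PT2_pair_measure prob_on_circle_haarT prob_on_circle_marg1 tmom_marg1_haar)

lemma eq_haar_haar_iff: "PT2 \<nu> \<Longrightarrow> \<nu> = haarT \<Otimes>\<^sub>M haarT \<longleftrightarrow> tmom \<nu> = mom_haar_haar"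
  using eq_iff_tmom_fixed[where \<Phi> = "\<lambda>_. mom_haar_haar", OF _ PT2_products(3) tmom_products(3)] .

lemma mom_diag_fixed_iff:
  assumes "PT2 \<nu>"
  shows "tmom \<nu> = mom_diag (tmom \<nu>) \<longleftrightarrow>
    (\<forall>(p::int) (q::nat). tmom \<nu> p (int q) = (if p = int q then tmom \<nu> 1 1 powi p else 0))"
proof (intro iffI allI)
  fix p :: int and q :: nat
  assume "tmom \<nu> = mom_diag (tmom \<nu>)"
  then have "tmom \<nu> p (int q) = mom_diag (tmom \<nu>) p (int q)"
    by (rule fun_cong[OF fun_cong])
  also have "\<dots> = (if p = int q then tmom \<nu> 1 1 powi p else 0)"
    by (simp add: mom_diag_def power_int_def)
  finally show "tmom \<nu> p (int q) = (if p = int q then tmom \<nu> 1 1 powi p else 0)" .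
next
  assume H: "\<forall>(p::int) (q::nat). tmom \<nu> p (int q) = (if p = int q then tmom \<nu> 1 1 powi p else 0)"
  have "tmom \<nu> p q = mom_diag (tmom \<nu>) p q" for p q
  proof (cases "0 \<le> q")
    case True
    have "tmom \<nu> p q = (if p = q then tmom \<nu> 1 1 powi p else 0)"
      using H[rule_format, of p "nat q"] True by simp
    then show ?thesis
      using True by (simp add: mom_diag_def power_int_def)
  next
    case False
    have "tmom \<nu> p q = cnj (tmom \<nu> (- p) (- q))"
      using tmom_uminus[OF assms, of "- p" "- q"] by simp
    also have "\<dots> = cnj (if p = q then tmom \<nu> 1 1 powi (- p) else 0)"
      using H[rule_format, of "- p" "nat (- q)"] False by simp
    also have "\<dots> = mom_diag (tmom \<nu>) p q"
      using False tmom_uminus[OF assms, of 1 1] by (simp add: mom_diag_def power_int_def)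
    finally show ?thesis .
  qed
  then show "tmom \<nu> = mom_diag (tmom \<nu>)"
    by blast
qed

lemma mom_haar_idem:
  "mom_haar_fst (mom_haar_fst m) = mom_haar_fst m" "mom_haar_snd (mom_haar_snd m) = mom_haar_snd m"
  "mom_diag (mom_diag m) = mom_diag m"
  by (auto simp: fun_eq_iff mom_haar_fst_def mom_haar_snd_def mom_haar_haar_def mom_diag_def)

lemma mom_haar_flip:
  "mom_haar_fst (\<lambda>p q. m p (- q)) = (\<lambda>p q. mom_haar_fst m p (- q))"
  "mom_haar_snd (\<lambda>p q. m p (- q)) = (\<lambda>p q. mom_haar_snd m p (- q))"
  "mom_haar_haar = (\<lambda>p q. mom_haar_haar p (- q))"
  by (auto simp: fun_eq_iff mom_haar_fst_def mom_haar_snd_def mom_haar_haar_def)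

lemma factor_haar_delta1_iff:
  assumes "PT2 \<nu>"
  shows "bb_factor (haarT \<Otimes>\<^sub>M delta1) \<nu> \<longleftrightarrow> \<nu> = haarT \<Otimes>\<^sub>M marg2 \<nu>"
    and "bbop_factor (haarT \<Otimes>\<^sub>M delta1) \<nu> \<longleftrightarrow> \<nu> = haarT \<Otimes>\<^sub>M marg2 \<nu>"
proof -
  show "bb_factor (haarT \<Otimes>\<^sub>M delta1) \<nu> \<longleftrightarrow> \<nu> = haarT \<Otimes>\<^sub>M marg2 \<nu>"
    unfolding eq_haar_marg2_iff[OF assms]
    by (rule bb_factor_iff_fixed_point[OF assms fock_moment_factor_haar_fst[OF tmom_products(1)] mom_haar_idem(1)])
  show "bbop_factor (haarT \<Otimes>\<^sub>M delta1) \<nu> \<longleftrightarrow> \<nu> = haarT \<Otimes>\<^sub>M marg2 \<nu>"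
    unfolding eq_haar_marg2_iff[OF assms]
    by (rule bbop_factor_iff_fixed_point[OF assms fock_moment_factor_haar_fst[OF tmom_tstar_products(1)] mom_haar_idem(1)
          mom_haar_flip(1)])
qed

lemma factor_delta1_haar_iff:
  assumes "PT2 \<nu>"
  shows "bb_factor (delta1 \<Otimes>\<^sub>M haarT) \<nu> \<longleftrightarrow> \<nu> = marg1 \<nu> \<Otimes>\<^sub>M haarT"
    and "bbop_factor (delta1 \<Otimes>\<^sub>M haarT) \<nu> \<longleftrightarrow> \<nu> = marg1 \<nu> \<Otimes>\<^sub>M haarT"
proof -
  show "bb_factor (delta1 \<Otimes>\<^sub>M haarT) \<nu> \<longleftrightarrow> \<nu> = marg1 \<nu> \<Otimes>\<^sub>M haarT"
    unfolding eq_marg1_haar_iff[OF assms]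
    by (rule bb_factor_iff_fixed_point[OF assms fock_moment_factor_haar_snd[OF tmom_products(2)] mom_haar_idem(2)])
  show "bbop_factor (delta1 \<Otimes>\<^sub>M haarT) \<nu> \<longleftrightarrow> \<nu> = marg1 \<nu> \<Otimes>\<^sub>M haarT"
    unfolding eq_marg1_haar_iff[OF assms]
    by (rule bbop_factor_iff_fixed_point[OF assms fock_moment_factor_haar_snd[OF tmom_tstar_products(2)] mom_haar_idem(2)
          mom_haar_flip(2)])
qed

lemma factor_haar_haar_iff:
  assumes "PT2 \<nu>"
  shows "bb_factor (haarT \<Otimes>\<^sub>M haarT) \<nu> \<longleftrightarrow> \<nu> = haarT \<Otimes>\<^sub>M haarT"
    and "bbop_factor (haarT \<Otimes>\<^sub>M haarT) \<nu> \<longleftrightarrow> \<nu> = haarT \<Otimes>\<^sub>M haarT"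
proof -
  show "bb_factor (haarT \<Otimes>\<^sub>M haarT) \<nu> \<longleftrightarrow> \<nu> = haarT \<Otimes>\<^sub>M haarT"
    unfolding eq_haar_haar_iff[OF assms]
    by (rule bb_factor_iff_fixed_point[OF assms fock_moment_factor_haar_haar[OF tmom_products(3)]])
      simp
  show "bbop_factor (haarT \<Otimes>\<^sub>M haarT) \<nu> \<longleftrightarrow> \<nu> = haarT \<Otimes>\<^sub>M haarT"
    unfolding eq_haar_haar_iff[OF assms]
    by (rule bbop_factor_iff_fixed_point[OF assms fock_moment_factor_haar_haar[OF tmom_tstar_products(3)]])
      (simp_all add: mom_haar_flip(3)[symmetric])
qed

lemma factor_Pmeas_iff:
  assumes "PT2 \<nu>"
  shows "bb_factor Pmeas \<nu> \<longleftrightarrow>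
      (\<forall>(p::int) (q::nat). tmom \<nu> p (int q) = (if p = int q then tmom \<nu> 1 1 powi p else 0))"
    and "bbop_factor (tstar Pmeas) \<nu> \<longleftrightarrow>
      (\<forall>(p::int) (n::nat). tmom \<nu> p (- int n) = (if p = int n then tmom \<nu> 1 (-1) powi p else 0))"
proof -
  have P: "bb_factor Pmeas \<nu>' \<longleftrightarrow>
      (\<forall>(p::int) (q::nat). tmom \<nu>' p (int q) = (if p = int q then tmom \<nu>' 1 1 powi p else 0))"
    if "PT2 \<nu>'" for \<nu>'
    unfolding mom_diag_fixed_iff[OF that, symmetric]
    by (rule bb_factor_iff_fixed_point[OF that fock_moment_factor_Pmeas mom_haar_idem(3)])
  show "bb_factor Pmeas \<nu> \<longleftrightarrow>
      (\<forall>(p::int) (q::nat). tmom \<nu> p (int q) = (if p = int q then tmom \<nu> 1 1 powi p else 0))"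
    by (rule P[OF assms])
  show "bbop_factor (tstar Pmeas) \<nu> \<longleftrightarrow>
      (\<forall>(p::int) (n::nat). tmom \<nu> p (- int n) = (if p = int n then tmom \<nu> 1 (-1) powi p else 0))"
    unfolding bbop_factor_iff_bb_factor_tstar[OF assms] tstar_tstar[OF sets_Pmeas] P[OF PT2_tstar[OF assms]]
    by (simp add: tmom_tstar[OF PT2_sets[OF assms]])
qed

theorem proposition3p3:
  fixes \<nu> :: "(complex \<times> complex) measure"
  assumes "PT2 \<nu>"
  shows "(bb_factor (haarT \<Otimes>\<^sub>M delta1) \<nu> \<longleftrightarrow> \<nu> = haarT \<Otimes>\<^sub>M marg2 \<nu>)
    \<and> (bb_factor (delta1 \<Otimes>\<^sub>M haarT) \<nu> \<longleftrightarrow> \<nu> = marg1 \<nu> \<Otimes>\<^sub>M haarT)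
    \<and> (bb_factor (haarT \<Otimes>\<^sub>M haarT) \<nu> \<longleftrightarrow> \<nu> = haarT \<Otimes>\<^sub>M haarT)
    \<and> (bb_factor Pmeas \<nu> \<longleftrightarrow>
         (\<forall>(p::int) (q::nat). tmom \<nu> p (int q) = (if p = int q then tmom \<nu> 1 1 powi p else 0)))
    \<and> (bbop_factor (haarT \<Otimes>\<^sub>M delta1) \<nu> \<longleftrightarrow> \<nu> = haarT \<Otimes>\<^sub>M marg2 \<nu>)
    \<and> (bbop_factor (delta1 \<Otimes>\<^sub>M haarT) \<nu> \<longleftrightarrow> \<nu> = marg1 \<nu> \<Otimes>\<^sub>M haarT)
    \<and> (bbop_factor (haarT \<Otimes>\<^sub>M haarT) \<nu> \<longleftrightarrow> \<nu> = haarT \<Otimes>\<^sub>M haarT)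
    \<and> (bbop_factor (tstar Pmeas) \<nu> \<longleftrightarrow>
         (\<forall>(p::int) (n::nat). tmom \<nu> p (- int n) =
            (if p = int n then tmom \<nu> 1 (-1) powi p else 0)))"
  using factor_haar_delta1_iff[OF assms] factor_delta1_haar_iff[OF assms]
    factor_haar_haar_iff[OF assms] factor_Pmeas_iff[OF assms] by blast

end
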